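(* Let $x_a,x_b,l\in\mathbb{R}$ and $U=\{x\in C^1[a,b]: x(a)=x_a,\ x(b)=x_b\}$. Let $x$ be a local minimizer of $J(x)=\int_a^b L(t,x(t),{}^CD_{a+}^{\alpha,\rho}x(t))\,dt$ on $U$ subject to the constraint $I(x)=\int_a^b g(t,x(t),{}^CD_{a+}^{\alpha,\rho}x(t))\,dt=l$. If $x$ is not an extremal of $I$, then there exists $\lambda\in\mathbb{R}$ such that, with $K=L+\lambda g$, $$\partial_2K(t,x(t),{}^CD_{a+}^{\alpha,\rho} x(t))-D_{b-}^{\alpha,\rho}\big(\partial_3K(t,x(t),{}^CD_{a+}^{\alpha,\rho} x(t))\big)=0\quad\text{on }[a,b].$$
   Context: Fix $0<a<b<\infty$, $\alpha\in(0,1)$, $\rho>0$. For $x\in C^1[a,b]$, ${}^CD_{a+}^{\alpha,\rho} x(t)=\frac{\rho^\alpha}{\Gamma(1-\alpha)}\, t^{1-\rho}\frac{d}{dt}\int_a^t \frac{\tau^{\rho-1}}{(t^\rho-\tau^\rho)^\alpha}[x(\tau)-x(a)]\,d\tau=\frac{\rho^\alpha}{\Gamma(1-\alpha)}\int_a^t (t^\rho-\tau^\rho)^{-\alpha}x'(\tau)\,d\tau$. For a function $f$, $D_{b-}^{\alpha,\rho} f(t)=\frac{\rho^\alpha}{\Gamma(1-\alpha)}\frac{d}{dt}\int_t^b (\tau^\rho-t^\rho)^{-\alpha}f(\tau)\,d\tau$. $\partial_i$ denotes the partial derivative with respect to the $i$-th argument. Each of $L,g:[a,b]\times\mathbb{R}^2\to\mathbb{R}$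 is continuously differentiable with respect to its second and third arguments, and for every $x\in C^1[a,b]$ the maps $t\mapsto D_{b-}^{\alpha,\rho}(\partial_3L(t,x(t),{}^CD_{a+}^{\alpha,\rho}x(t)))$ and $t\mapsto D_{b-}^{\alpha,\rho}(\partial_3g(t,x(t),{}^CD_{a+}^{\alpha,\rho}x(t)))$ are continuous. "$x$ is an extremal of $I$" means $\partial_2g(t,x(t),{}^CD_{a+}^{\alpha,\rho}x(t))-D_{b-}^{\alpha,\rho}(\partial_3g(t,x(t),{}^CD_{a+}^{\alpha,\rho}x(t)))=0$ on $[a,b]$. $C^1[a,b]$ carries the norm $\|x\|=\max|x|+\max|{}^CD_{a+}^{\alpha,\rho}x|$, and local minimizers are taken with respect to this norm. *)

theory Defs
  imports "HOL-Analysis.Analysis"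
begin

definition C1_on :: "real \<Rightarrow> real \<Rightarrow> (real \<Rightarrow> real) \<Rightarrow> bool" where
  "C1_on a b x \<longleftrightarrow> (\<exists>x'. (\<forall>t\<in>{a..b}. (x has_real_derivative x' t) (at t within {a..b}))
      \<and> continuous_on {a..b} x')"

definition capD :: "real \<Rightarrow> real \<Rightarrow> real \<Rightarrow> real \<Rightarrow> (real \<Rightarrow> real) \<Rightarrow> real \<Rightarrow> real" where
  "capD \<alpha> \<rho> a b x t = \<rho> powr \<alpha> / Gamma (1 - \<alpha>) *
     integral {a..t} (\<lambda>\<tau>. (t powr \<rho> - \<tau> powr \<rho>) powr (-\<alpha>) * vector_derivative x (at \<tau> within {a..b}))"

definition rightD :: "real \<Rightarrow> real \<Rightarrow> real \<Rightarrow> real \<Rightarrow> (real \<Rightarrow> real) \<Rightarrow> real \<Rightarrow> real" where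
  "rightD \<alpha> \<rho> a b f t = \<rho> powr \<alpha> / Gamma (1 - \<alpha>) *
     vector_derivative (\<lambda>s. integral {s..b} (\<lambda>\<tau>. (\<tau> powr \<rho> - s powr \<rho>) powr (-\<alpha>) * f \<tau>))
       (at t within {a..b})"

definition rightD_exists_cont :: "real \<Rightarrow> real \<Rightarrow> real \<Rightarrow> real \<Rightarrow> (real \<Rightarrow> real) \<Rightarrow> bool" where
  "rightD_exists_cont \<alpha> \<rho> a b f \<longleftrightarrow>
     (\<forall>t\<in>{a..b}. (\<lambda>s. integral {s..b} (\<lambda>\<tau>. (\<tau> powr \<rho> - s powr \<rho>) powr (-\<alpha>) * f \<tau>))
        differentiable (at t within {a..b}))
     \<and> continuous_on {a..b} (rightD \<alpha> \<rho> a b f)"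

definition partial2 :: "(real \<Rightarrow> real \<Rightarrow> real \<Rightarrow> real) \<Rightarrow> real \<Rightarrow> real \<Rightarrow> real \<Rightarrow> real" where
  "partial2 F t u v = deriv (\<lambda>w. F t w v) u"

definition partial3 :: "(real \<Rightarrow> real \<Rightarrow> real \<Rightarrow> real) \<Rightarrow> real \<Rightarrow> real \<Rightarrow> real \<Rightarrow> real" where
  "partial3 F t u v = deriv (\<lambda>w. F t u w) v"

definition lagrangian_ok :: "real \<Rightarrow> real \<Rightarrow> real \<Rightarrow> real \<Rightarrow> (real \<Rightarrow> real \<Rightarrow> real \<Rightarrow> real) \<Rightarrow> bool" where
  "lagrangian_ok \<alpha> \<rho> a b F \<longleftrightarrow>
     continuous_on ({a..b} \<times> UNIV \<times> UNIV) (\<lambda>(t,u,v). F t u v)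
   \<and> (\<forall>t\<in>{a..b}. \<forall>u v. (\<lambda>w. F t w v) differentiable (at u) \<and> (\<lambda>w. F t u w) differentiable (at v))
   \<and> continuous_on ({a..b} \<times> UNIV \<times> UNIV) (\<lambda>(t,u,v). partial2 F t u v)
   \<and> continuous_on ({a..b} \<times> UNIV \<times> UNIV) (\<lambda>(t,u,v). partial3 F t u v)
   \<and> (\<forall>y. C1_on a b y \<longrightarrow>
        rightD_exists_cont \<alpha> \<rho> a b (\<lambda>t. partial3 F t (y t) (capD \<alpha> \<rho> a b y t)))"

definition functional :: "real \<Rightarrow> real \<Rightarrow> real \<Rightarrow> real \<Rightarrow> (real \<Rightarrow> real \<Rightarrow> real \<Rightarrow> real) \<Rightarrow> (real \<Rightarrow> real) \<Rightarrow> real" where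
  "functional \<alpha> \<rho> a b F y = integral {a..b} (\<lambda>t. F t (y t) (capD \<alpha> \<rho> a b y t))"

definition frac_norm :: "real \<Rightarrow> real \<Rightarrow> real \<Rightarrow> real \<Rightarrow> (real \<Rightarrow> real) \<Rightarrow> real" where
  "frac_norm \<alpha> \<rho> a b z = (SUP t\<in>{a..b}. \<bar>z t\<bar>) + (SUP t\<in>{a..b}. \<bar>capD \<alpha> \<rho> a b z t\<bar>)"

definition euler_lagrange :: "real \<Rightarrow> real \<Rightarrow> real \<Rightarrow> real \<Rightarrow> (real \<Rightarrow> real \<Rightarrow> real \<Rightarrow> real) \<Rightarrow> (real \<Rightarrow> real) \<Rightarrow> bool" where
  "euler_lagrange \<alpha> \<rho> a b F x \<longleftrightarrow> (\<forall>t\<in>{a..b}.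
     partial2 F t (x t) (capD \<alpha> \<rho> a b x t)
     - rightD \<alpha> \<rho> a b (\<lambda>s. partial3 F s (x s) (capD \<alpha> \<rho> a b x s)) t = 0)"

end

theory Submission
  imports Defs
begin

text \<open>Perturb the minimiser in two directions, \<open>x + e\<^sub>1\<eta>\<^sub>1 + e\<^sub>2\<eta>\<^sub>2\<close>. Writing both functionals
  as functions of \<open>e\<close>, their derivatives at \<open>0\<close> are, after the fractional integration by parts
  \<open>\<integral> f \<^sup>CD\<^sub>a\<^sub>+ \<eta> = -\<integral> \<eta> D\<^sub>b\<^sub>- f\<close> (Fubini on the triangle \<open>a \<le> \<tau> \<le> t \<le> b\<close>), the pairings
  \<open>\<integral> \<eta>\<^sub>i E\<^sub>L\<close> and \<open>\<integral> \<eta>\<^sub>i E\<^sub>g\<close> with the Euler--Lagrange expressions. If the resulting \<open>2\<times>2\<close> Jacobian were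
  invertible, the map \<open>e \<mapsto> (J, I)\<close> would be open at \<open>0\<close>, contradicting constrained minimality; so
  its determinant vanishes for all \<open>\<eta>\<^sub>1\<close>. Choosing \<open>\<eta>\<^sub>2\<close> with \<open>\<integral> \<eta>\<^sub>2 E\<^sub>g \<noteq> 0\<close> (possible as \<open>x\<close> is
  not an extremal of \<open>I\<close>) fixes \<open>\<lambda>\<close>, and the fundamental lemma of the calculus of variations
  gives \<open>E\<^sub>L + \<lambda> E\<^sub>g = 0\<close>.\<close>

abbreviation kat_kernel :: "real \<Rightarrow> real \<Rightarrow> real \<Rightarrow> real \<Rightarrow> real" where
  "kat_kernel \<alpha> \<rho> t \<tau> \<equiv> (t powr \<rho> - \<tau> powr \<rho>) powr (-\<alpha>)"

definition powr_min_slope :: "real \<Rightarrow> real \<Rightarrow> real \<Rightarrow> real" where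
  "powr_min_slope \<rho> a b = \<rho> * min (a powr (\<rho>-1)) (b powr (\<rho>-1))"

lemma powr_min_slope_pos: "0 < a \<Longrightarrow> 0 < b \<Longrightarrow> 0 < \<rho> \<Longrightarrow> 0 < powr_min_slope \<rho> a b"
  by (simp add: powr_min_slope_def)

lemma powr_diff_ge_min_slope:
  fixes a b t \<tau> \<rho> :: real
  assumes "0 < a" "a \<le> \<tau>" "\<tau> \<le> t" "t \<le> b" "0 < \<rho>"
  shows "powr_min_slope \<rho> a b * (t - \<tau>) \<le> t powr \<rho> - \<tau> powr \<rho>"
proof (cases "\<tau> = t")
  case False
  then have lt: "\<tau> < t" using assms by simp
  have "\<And>z. \<tau> \<le> z \<and> z \<le> t \<Longrightarrow> ((\<lambda>z. z powr \<rho>) has_real_derivative \<rho> * z powr (\<rho>-1)) (at z)"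
    using assms by (intro has_real_derivative_powr) auto
  from MVT2[OF lt this] obtain z where z: "\<tau> < z" "z < t"
    "t powr \<rho> - \<tau> powr \<rho> = (t - \<tau>) * (\<rho> * z powr (\<rho>-1))" by blast
  \<comment> \<open>\<open>z powr (\<rho>-1)\<close> is monotone in \<open>z\<close>, so it is bounded below by its value at an endpoint\<close>
  have "min (a powr (\<rho>-1)) (b powr (\<rho>-1)) \<le> z powr (\<rho>-1)"
  proof (cases "\<rho> - 1 \<ge> 0")
    case True
    then have "a powr (\<rho>-1) \<le> z powr (\<rho>-1)" using z assms by (intro powr_mono2) auto
    then show ?thesis by simp
  next
    case False
    then have "b powr (\<rho>-1) \<le> z powr (\<rho>-1)" using z assms by (intro powr_mono2') auto
    then show ?thesis by simp
  qed
  then have "powr_min_slope \<rho> a b * (t - \<tau>) \<le> \<rho> * z powr (\<rho>-1) * (t - \<tau>)"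
    unfolding powr_min_slope_def using assms lt by (intro mult_right_mono mult_left_mono) auto
  then show ?thesis using z by (simp add: algebra_simps)
qed simp

lemma kat_kernel_le:
  fixes a b t \<tau> \<rho> \<alpha> :: real
  assumes "0 < a" "a \<le> \<tau>" "\<tau> \<le> t" "t \<le> b" "0 < \<rho>" "0 < \<alpha>"
  shows "kat_kernel \<alpha> \<rho> t \<tau> \<le> powr_min_slope \<rho> a b powr (-\<alpha>) * (t - \<tau>) powr (-\<alpha>)"
proof (cases "\<tau> = t")
  case False
  let ?m = "powr_min_slope \<rho> a b"
  have m: "0 < ?m" using assms by (intro powr_min_slope_pos) auto
  have "kat_kernel \<alpha> \<rho> t \<tau> \<le> (?m * (t - \<tau>)) powr (-\<alpha>)"
    using assms m False powr_diff_ge_min_slope[OF assms(1-5)] by (intro powr_mono2') auto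
  also have "\<dots> = ?m powr (-\<alpha>) * (t - \<tau>) powr (-\<alpha>)"
    using m assms False by (simp add: powr_mult)
  finally show ?thesis .
qed simp

lemma powr_neg_shift_has_integral:
  fixes p q \<alpha> :: real
  assumes "0 < \<alpha>" "\<alpha> < 1" "p \<le> q"
  shows "((\<lambda>\<tau>. (\<tau> - p) powr (-\<alpha>)) has_integral ((q-p) powr (1-\<alpha>)/(1-\<alpha>))) {p..q}"
    and "((\<lambda>\<tau>. (q - \<tau>) powr (-\<alpha>)) has_integral ((q-p) powr (1-\<alpha>)/(1-\<alpha>))) {p..q}"
proof -
  have h: "((\<lambda>x. x powr (-\<alpha>)) has_integral ((q-p) powr (1-\<alpha>)/(1-\<alpha>))) (cbox 0 (q-p))"
    using has_integral_powr_from_0[of "-\<alpha>" "q-p"] assms by simp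
  from has_integral_affinity'[OF h, of 1 "-p"]
  show "((\<lambda>\<tau>. (\<tau> - p) powr (-\<alpha>)) has_integral ((q-p) powr (1-\<alpha>)/(1-\<alpha>))) {p..q}"
    by simp
  from has_integral_affinity'[OF h, of 1 "q"]
  have "((\<lambda>x. (x + q) powr (-\<alpha>)) has_integral ((q-p) powr (1-\<alpha>)/(1-\<alpha>))) {-q..-p}"
    by simp
  then have "((\<lambda>x. (-x + q) powr (-\<alpha>)) has_integral ((q-p) powr (1-\<alpha>)/(1-\<alpha>))) {-(-p)..-(-q)}"
    by (subst has_integral_reflect_real) simp
  then show "((\<lambda>\<tau>. (q - \<tau>) powr (-\<alpha>)) has_integral ((q-p) powr (1-\<alpha>)/(1-\<alpha>))) {p..q}"
    by simp
qed

lemma borel_measurable_real_lebesgue_on: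
  "(f::real \<Rightarrow> real) \<in> borel_measurable borel \<Longrightarrow> f \<in> borel_measurable (lebesgue_on S)"
  using measurable_completion measurable_lborel2 measurable_restrict_space1 by blast

lemma kat_kernel_absolutely_integrable:
  fixes a b p q \<rho> \<alpha> :: real
  assumes "0 < a" "a \<le> p" "p \<le> q" "q \<le> b" "0 < \<rho>" "0 < \<alpha>" "\<alpha> < 1"
  shows "(\<lambda>\<tau>. kat_kernel \<alpha> \<rho> q \<tau>) absolutely_integrable_on {p..q}"
    and "integral {p..q} (\<lambda>\<tau>. kat_kernel \<alpha> \<rho> q \<tau>)
          \<le> powr_min_slope \<rho> a b powr (-\<alpha>) * ((q-p) powr (1-\<alpha>)/(1-\<alpha>))"
    and "(\<lambda>t. kat_kernel \<alpha> \<rho> t p) absolutely_integrable_on {p..q}"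
proof -
  let ?c = "powr_min_slope \<rho> a b powr (-\<alpha>)"
  have left: "((\<lambda>\<tau>. ?c * (q - \<tau>) powr (-\<alpha>)) has_integral ?c * ((q-p) powr (1-\<alpha>)/(1-\<alpha>))) {p..q}"
    and right: "((\<lambda>\<tau>. ?c * (\<tau> - p) powr (-\<alpha>)) has_integral ?c * ((q-p) powr (1-\<alpha>)/(1-\<alpha>))) {p..q}"
    using has_integral_mult_right[OF powr_neg_shift_has_integral(2)[of \<alpha> p q]]
      has_integral_mult_right[OF powr_neg_shift_has_integral(1)[of \<alpha> p q]] assms by simp_all
  have bound_left: "\<bar>kat_kernel \<alpha> \<rho> q \<tau>\<bar> \<le> ?c * (q - \<tau>) powr (-\<alpha>)" if "\<tau> \<in> {p..q}" for \<tau>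
    using kat_kernel_le[of a \<tau> q b \<rho> \<alpha>] assms that by auto
  have bound_right: "\<bar>kat_kernel \<alpha> \<rho> t p\<bar> \<le> ?c * (t - p) powr (-\<alpha>)" if "t \<in> {p..q}" for t
    using kat_kernel_le[of a p t b \<rho> \<alpha>] assms that by auto
  have meas: "(\<lambda>\<tau>. kat_kernel \<alpha> \<rho> q \<tau>) \<in> borel_measurable (lebesgue_on {p..q})"
    "(\<lambda>t. kat_kernel \<alpha> \<rho> t p) \<in> borel_measurable (lebesgue_on {p..q})"
    by (rule borel_measurable_real_lebesgue_on, measurable)+
  show li: "(\<lambda>\<tau>. kat_kernel \<alpha> \<rho> q \<tau>) absolutely_integrable_on {p..q}"
    using measurable_bounded_by_integrable_imp_absolutely_integrable[OF meas(1) _ has_integral_integrable[OF left]]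
      bound_left by auto
  show "(\<lambda>t. kat_kernel \<alpha> \<rho> t p) absolutely_integrable_on {p..q}"
    using measurable_bounded_by_integrable_imp_absolutely_integrable[OF meas(2) _ has_integral_integrable[OF right]]
      bound_right by auto
  have "integral {p..q} (\<lambda>\<tau>. kat_kernel \<alpha> \<rho> q \<tau>) \<le> integral {p..q} (\<lambda>\<tau>. ?c * (q - \<tau>) powr (-\<alpha>))"
    using li bound_left has_integral_integrable[OF left]
    by (intro integral_le) (auto dest: set_lebesgue_integral_eq_integral(1))
  then show "integral {p..q} (\<lambda>\<tau>. kat_kernel \<alpha> \<rho> q \<tau>) \<le> ?c * ((q-p) powr (1-\<alpha>)/(1-\<alpha>))"
    using integral_unique[OF left] by simp
qed

lemma absolutely_integrable_times_continuous:
  fixes k h :: "real \<Rightarrow> real"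
  assumes "k absolutely_integrable_on {p..q}" "continuous_on {p..q} h"
  shows "(\<lambda>\<tau>. k \<tau> * h \<tau>) absolutely_integrable_on {p..q}"
proof -
  have "(\<lambda>\<tau>. h \<tau> * k \<tau>) absolutely_integrable_on {p..q}"
    using assms compact_continuous_image[OF assms(2)] compact_imp_bounded
    by (intro absolutely_integrable_bounded_measurable_product_real)
       (auto simp: continuous_imp_measurable_on_sets_lebesgue)
  then show ?thesis by (simp add: mult.commute)
qed

lemma kat_kernel_times_continuous_integrable:
  fixes a b \<rho> \<alpha> :: real and h :: "real \<Rightarrow> real"
  assumes "0 < a" "0 < \<rho>" "0 < \<alpha>" "\<alpha> < 1" "continuous_on {a..b} h"
  shows "t \<in> {a..b} \<Longrightarrow> (\<lambda>\<tau>. kat_kernel \<alpha> \<rho> t \<tau> * h \<tau>) absolutely_integrable_on {a..t}"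
    and "s \<in> {a..b} \<Longrightarrow> (\<lambda>\<tau>. kat_kernel \<alpha> \<rho> \<tau> s * h \<tau>) absolutely_integrable_on {s..b}"
proof -
  show "t \<in> {a..b} \<Longrightarrow> (\<lambda>\<tau>. kat_kernel \<alpha> \<rho> t \<tau> * h \<tau>) absolutely_integrable_on {a..t}"
    using assms kat_kernel_absolutely_integrable(1)[of a a t b \<rho> \<alpha>]
    by (intro absolutely_integrable_times_continuous) (auto intro: continuous_on_subset)
  show "s \<in> {a..b} \<Longrightarrow> (\<lambda>\<tau>. kat_kernel \<alpha> \<rho> \<tau> s * h \<tau>) absolutely_integrable_on {s..b}"
    using assms kat_kernel_absolutely_integrable(3)[of a s b b \<rho> \<alpha>]
    by (intro absolutely_integrable_times_continuous) (auto intro: continuous_on_subset)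
qed

text \<open>The substitution \<open>\<tau> = a + s (t - a)\<close> moves the fractional integral over \<open>[a, t]\<close> to the fixed
  interval \<open>[0, 1]\<close>, where dominated convergence in \<open>t\<close> applies.\<close>
definition rescaled_frac_integrand ::
    "real \<Rightarrow> real \<Rightarrow> real \<Rightarrow> (real \<Rightarrow> real) \<Rightarrow> real \<Rightarrow> real \<Rightarrow> real" where
  "rescaled_frac_integrand \<alpha> \<rho> a h t s = (t - a) * (kat_kernel \<alpha> \<rho> t (a + s*(t-a)) * h (a + s*(t-a)))"

lemma rescaled_frac_integrand_has_integral:
  fixes a b \<rho> \<alpha> t :: real and h :: "real \<Rightarrow> real"
  assumes "0 < a" "0 < \<rho>" "0 < \<alpha>" "\<alpha> < 1" "continuous_on {a..b} h" "t \<in> {a..b}"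
  shows "(rescaled_frac_integrand \<alpha> \<rho> a h t has_integral
           integral {a..t} (\<lambda>\<tau>. kat_kernel \<alpha> \<rho> t \<tau> * h \<tau>)) {0..1}"
proof (cases "t = a")
  case False
  let ?I = "integral {a..t} (\<lambda>\<tau>. kat_kernel \<alpha> \<rho> t \<tau> * h \<tau>)"
  have ta: "t > a" using False assms by auto
  have "((\<lambda>\<tau>. kat_kernel \<alpha> \<rho> t \<tau> * h \<tau>) has_integral ?I) (cbox a t)"
    using kat_kernel_times_continuous_integrable(1)[OF assms]
    by (auto intro: integrable_integral dest: set_lebesgue_integral_eq_integral(1))
  from has_integral_affinity'[OF this, of "t-a" a] ta
  have "((\<lambda>s. kat_kernel \<alpha> \<rho> t ((t-a) * s + a) * h ((t-a) * s + a)) has_integral ?I / (t-a)) {0..1}"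
    by (simp add: divide_simps)
  from has_integral_mult_right[OF this, of "t-a"] ta
  have "((\<lambda>s. (t-a) * (kat_kernel \<alpha> \<rho> t ((t-a) * s + a) * h ((t-a) * s + a))) has_integral ?I) {0..1}"
    by simp
  then show ?thesis unfolding rescaled_frac_integrand_def by (simp add: algebra_simps)
qed (simp add: rescaled_frac_integrand_def[abs_def])

lemma rescaled_frac_integrand_bound:
  fixes a b \<rho> \<alpha> t s M :: real and h :: "real \<Rightarrow> real"
  assumes "0 < a" "0 < \<rho>" "0 < \<alpha>" "\<alpha> < 1" "t \<in> {a..b}" "s \<in> {0..1}"
    and M: "\<And>\<tau>. \<tau> \<in> {a..b} \<Longrightarrow> \<bar>h \<tau>\<bar> \<le> M"
  shows "\<bar>rescaled_frac_integrand \<alpha> \<rho> a h t s\<bar>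
           \<le> M * powr_min_slope \<rho> a b powr (-\<alpha>) * (t-a) powr (1-\<alpha>) * (1-s) powr (-\<alpha>)"
proof (cases "t = a \<or> s = 1")
  case True
  then show ?thesis
    using assms M[of t] by (auto simp: rescaled_frac_integrand_def intro!: mult_nonneg_nonneg)
next
  case False
  let ?c = "powr_min_slope \<rho> a b powr (-\<alpha>)"
  have ta: "t > a" and s1: "s < 1" using False assms by auto
  have "s*(t-a) \<le> t-a" using assms ta mult_right_mono[of s 1 "t-a"] by simp
  moreover have "0 \<le> s*(t-a)" using assms ta by simp
  ultimately have inn: "a \<le> a + s*(t-a)" "a + s*(t-a) \<le> t" by linarith+
  have K: "kat_kernel \<alpha> \<rho> t (a + s*(t-a)) \<le> ?c * ((1-s) powr (-\<alpha>) * (t-a) powr (-\<alpha>))"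
  proof -
    have "t - (a + s*(t-a)) = (1-s)*(t-a)" by (simp add: algebra_simps)
    then show ?thesis
      using kat_kernel_le[of a "a + s*(t-a)" t b \<rho> \<alpha>] assms inn s1 ta by (simp add: powr_mult)
  qed
  have "\<bar>rescaled_frac_integrand \<alpha> \<rho> a h t s\<bar>
      = (t-a) * (kat_kernel \<alpha> \<rho> t (a + s*(t-a)) * \<bar>h (a + s*(t-a))\<bar>)"
    using ta by (simp add: rescaled_frac_integrand_def abs_mult)
  also have "\<dots> \<le> (t-a) * ((?c * ((1-s) powr (-\<alpha>) * (t-a) powr (-\<alpha>))) * M)"
    using K M[of "a + s*(t-a)"] inn assms ta by (intro mult_left_mono mult_mono) auto
  also have "\<dots> = M * ?c * ((t-a) * (t-a) powr (-\<alpha>)) * (1-s) powr (-\<alpha>)"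
    by (simp add: algebra_simps)
  also have "(t-a) * (t-a) powr (-\<alpha>) = (t-a) powr (1-\<alpha>)"
    using ta by (simp add: powr_diff powr_minus divide_simps)
  finally show ?thesis by simp
qed

lemma rescaled_frac_integrand_tendsto:
  fixes a b \<rho> \<alpha> t s :: real and h :: "real \<Rightarrow> real" and x :: "nat \<Rightarrow> real"
  assumes "0 < a" "0 < \<rho>" "0 < \<alpha>" "\<alpha> < 1" and hc: "continuous_on {a..b} h"
    and xs: "\<And>n. x n \<in> {a..b}" and t: "t \<in> {a..b}" and lim: "x \<longlonglongrightarrow> t" and s: "s \<in> {0..1}"
  shows "(\<lambda>n. rescaled_frac_integrand \<alpha> \<rho> a h (x n) s) \<longlonglongrightarrow> rescaled_frac_integrand \<alpha> \<rho> a h t s"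
proof -
  consider "s = 1" | "s < 1" "t = a" | "s < 1" "t > a" using s t by fastforce
  then show ?thesis
  proof cases
    case 1
    then show ?thesis by (simp add: rescaled_frac_integrand_def)
  next
    case 2
    obtain M where M: "\<And>\<tau>. \<tau> \<in> {a..b} \<Longrightarrow> \<bar>h \<tau>\<bar> \<le> M"
      using continuous_on_compact_bound[OF compact_Icc hc] by (metis real_norm_def)
    let ?c = "M * powr_min_slope \<rho> a b powr (-\<alpha>)"
    have "(\<lambda>n. (x n - a) powr (1-\<alpha>)) \<longlonglongrightarrow> 0"
      using lim 2 xs assms by (intro tendsto_zero_powrI[OF _ tendsto_const]) (auto intro!: tendsto_eq_intros)
    from tendsto_mult_right_zero[OF tendsto_mult_left_zero[OF this], of ?c "(1-s) powr (-\<alpha>)"]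
    have major: "(\<lambda>n. ?c * (x n - a) powr (1-\<alpha>) * (1-s) powr (-\<alpha>)) \<longlonglongrightarrow> 0"
      by (simp only: mult.assoc)
    have "\<forall>\<^sub>F n in sequentially. norm (rescaled_frac_integrand \<alpha> \<rho> a h (x n) s)
        \<le> ?c * (x n - a) powr (1-\<alpha>) * (1-s) powr (-\<alpha>)"
      using rescaled_frac_integrand_bound[of a \<rho> \<alpha> "x n" b s h M for n] assms xs s M
      by (intro always_eventually) simp
    from Lim_null_comparison[OF this major]
    have "(\<lambda>n. rescaled_frac_integrand \<alpha> \<rho> a h (x n) s) \<longlonglongrightarrow> 0" .
    then show ?thesis using 2 by (simp add: rescaled_frac_integrand_def)
  next
    case 3
    have "s*(t-a) < t-a" using mult_strict_right_mono[of s 1 "t-a"] 3 by simp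
    moreover have "0 \<le> s*(t-a)" using s 3 by simp
    ultimately have inn: "a \<le> a + s*(t-a)" "a + s*(t-a) < t" by linarith+
    then have "(a + s*(t-a)) powr \<rho> < t powr \<rho>"
      using assms by (intro powr_less_mono2) auto
    then have pos: "t powr \<rho> - (a + s*(t-a)) powr \<rho> \<noteq> 0" by simp
    have inab: "a + s*(u-a) \<in> {a..b}" if "u \<in> {a..b}" for u
      using that s mult_right_mono[of s 1 "u-a"] by auto
    have xl: "(\<lambda>n. a + s*(x n - a)) \<longlonglongrightarrow> a + s*(t-a)"
      by (intro tendsto_intros lim)
    have hl: "(\<lambda>n. h (a + s*(x n - a))) \<longlonglongrightarrow> h (a + s*(t-a))"
      by (rule continuous_on_tendsto_compose[OF hc xl]) (use xs inab t in auto)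
    have p1: "(\<lambda>n. x n powr \<rho>) \<longlonglongrightarrow> t powr \<rho>"
      by (rule tendsto_powr[OF lim tendsto_const]) (use 3 assms in auto)
    have p2: "(\<lambda>n. (a + s*(x n - a)) powr \<rho>) \<longlonglongrightarrow> (a + s*(t-a)) powr \<rho>"
      by (rule tendsto_powr[OF xl tendsto_const]) (use inn assms in auto)
    have "(\<lambda>n. kat_kernel \<alpha> \<rho> (x n) (a + s*(x n - a))) \<longlonglongrightarrow> kat_kernel \<alpha> \<rho> t (a + s*(t-a))"
      by (rule tendsto_powr[OF tendsto_diff[OF p1 p2] tendsto_const pos])
    then show ?thesis
      unfolding rescaled_frac_integrand_def by (intro tendsto_mult hl tendsto_diff lim tendsto_const)
  qed
qed

lemma continuous_on_frac_integral:
  fixes a b \<rho> \<alpha> :: real and h :: "real \<Rightarrow> real"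
  assumes "0 < a" "0 < \<rho>" "0 < \<alpha>" "\<alpha> < 1" and hc: "continuous_on {a..b} h"
  shows "continuous_on {a..b} (\<lambda>t. integral {a..t} (\<lambda>\<tau>. kat_kernel \<alpha> \<rho> t \<tau> * h \<tau>))"
proof (rule continuous_on_sequentiallyI)
  fix x t assume xs: "\<forall>n. x n \<in> {a..b}" and t: "t \<in> {a..b}" and lim: "x \<longlonglongrightarrow> t"
  let ?g = "rescaled_frac_integrand \<alpha> \<rho> a h"
  obtain M where M: "\<And>\<tau>. \<tau> \<in> {a..b} \<Longrightarrow> \<bar>h \<tau>\<bar> \<le> M"
    using continuous_on_compact_bound[OF compact_Icc hc] by (metis real_norm_def)
  define B where "B = M * powr_min_slope \<rho> a b powr (-\<alpha>) * (b-a) powr (1-\<alpha>)"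
  have dom: "norm (?g (x n) s) \<le> B * (1-s) powr (-\<alpha>)" if s: "s \<in> {0..1}" for n s
  proof -
    have "M \<ge> 0" using M[of t] t by linarith
    moreover have "(x n - a) powr (1-\<alpha>) \<le> (b-a) powr (1-\<alpha>)"
      using xs assms by (intro powr_mono2) auto
    ultimately have "M * powr_min_slope \<rho> a b powr (-\<alpha>) * (x n - a) powr (1-\<alpha>) * (1-s) powr (-\<alpha>)
        \<le> B * (1-s) powr (-\<alpha>)"
      unfolding B_def by (intro mult_right_mono mult_left_mono) auto
    then show ?thesis using rescaled_frac_integrand_bound[of a \<rho> \<alpha> "x n" b s h M] assms xs s M by force
  qed
  have "(\<lambda>s. (1-s) powr (-\<alpha>)) integrable_on {0..1::real}"
    using powr_neg_shift_has_integral(2)[of \<alpha> 0 1] assms by (auto intro: has_integral_integrable)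
  then have "(\<lambda>s. B * (1-s) powr (-\<alpha>)) integrable_on {0..1}" by (rule integrable_on_mult_right)
  moreover have "?g (x n) integrable_on {0..1}" for n
    using rescaled_frac_integrand_has_integral[OF assms(1-4) hc] xs by blast
  ultimately have "(\<lambda>n. integral {0..1} (?g (x n))) \<longlonglongrightarrow> integral {0..1} (?g t)"
    using rescaled_frac_integrand_tendsto[OF assms(1-4) hc _ t lim] xs dom
    by (intro dominated_convergence(2)) auto
  moreover have "integral {a..u} (\<lambda>\<tau>. kat_kernel \<alpha> \<rho> u \<tau> * h \<tau>) = integral {0..1} (?g u)"
    if "u \<in> {a..b}" for u
    using rescaled_frac_integrand_has_integral[OF assms(1-4) hc that] by (simp add: integral_unique)
  ultimately show "(\<lambda>n. integral {a..x n} (\<lambda>\<tau>. kat_kernel \<alpha> \<rho> (x n) \<tau> * h \<tau>))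
      \<longlonglongrightarrow> integral {a..t} (\<lambda>\<tau>. kat_kernel \<alpha> \<rho> t \<tau> * h \<tau>)"
    using xs t by simp
qed

lemma has_integral_lborel_indicator:
  fixes g :: "real \<Rightarrow> real"
  assumes "integrable lborel (\<lambda>x. indicator S x * g x)"
  shows "(g has_integral (LINT x|lborel. indicator S x * g x)) S"
proof -
  have "((\<lambda>x. indicator S x * g x) has_integral (LINT x|lborel. indicator S x * g x)) UNIV"
    using has_integral_integral_lborel[OF assms] .
  moreover have "(\<lambda>x. indicator S x * g x) = (\<lambda>x. if x \<in> S then g x else 0)"
    by (auto simp: indicator_def)
  ultimately show ?thesis using has_integral_restrict_UNIV by metis
qed

lemma absolutely_integrable_on_imp_lborel:
  fixes g :: "real \<Rightarrow> real"
  assumes "g absolutely_integrable_on S" "(\<lambda>x. indicator S x * g x) \<in> borel_measurable borel"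
  shows "integrable lborel (\<lambda>x. indicator S x * g x)"
    and "(LINT x|lborel. indicator S x * g x) = integral S g"
proof -
  have "integrable lebesgue (\<lambda>x. indicator S x * g x)"
    using assms(1) unfolding set_integrable_def by simp
  then show i: "integrable lborel (\<lambda>x. indicator S x * g x)"
  proof -
    have "(\<lambda>x. indicator S x * g x) \<in> borel_measurable lborel" using assms(2) by simp
    then show ?thesis using integrable_completion \<open>integrable lebesgue _\<close> by blast
  qed
  show "(LINT x|lborel. indicator S x * g x) = integral S g"
    using integral_unique[OF has_integral_lborel_indicator[OF i]] by simp
qed

text \<open>Fubini on the triangle \<open>a \<le> \<tau> \<le> t \<le> b\<close>; uniformly bounded row integrals make the
  integrand integrable on the plane.\<close>
lemma triangle_integral_swap:
  fixes k :: "real \<Rightarrow> real \<Rightarrow> real" and a b C :: real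
  defines "H \<equiv> \<lambda>(t,\<tau>). if a \<le> \<tau> \<and> \<tau> \<le> t \<and> t \<le> b then k t \<tau> else 0"
  assumes Hm: "H \<in> borel_measurable (lborel \<Otimes>\<^sub>M lborel)"
    and rows: "\<And>t. t \<in> {a..b} \<Longrightarrow> k t absolutely_integrable_on {a..t}"
    and cols: "\<And>\<tau>. \<tau> \<in> {a..b} \<Longrightarrow> (\<lambda>t. k t \<tau>) absolutely_integrable_on {\<tau>..b}"
    and bound: "\<And>t. t \<in> {a..b} \<Longrightarrow> integral {a..t} (\<lambda>\<tau>. \<bar>k t \<tau>\<bar>) \<le> C"
  shows "integral {a..b} (\<lambda>t. integral {a..t} (k t)) = integral {a..b} (\<lambda>\<tau>. integral {\<tau>..b} (\<lambda>t. k t \<tau>))"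
proof -
  note [measurable] = Hm
  have row_eq: "(\<lambda>\<tau>. H (t,\<tau>)) = (\<lambda>\<tau>. indicator {a..t} \<tau> * k t \<tau>)"
    and row_abs_eq: "(\<lambda>\<tau>. norm (H (t,\<tau>))) = (\<lambda>\<tau>. indicator {a..t} \<tau> * \<bar>k t \<tau>\<bar>)"
    if "t \<in> {a..b}" for t
    using that by (auto simp: H_def indicator_def fun_eq_iff)
  have col_eq: "(\<lambda>t. H (t,\<tau>)) = (\<lambda>t. indicator {\<tau>..b} t * k t \<tau>)" if "\<tau> \<in> {a..b}" for \<tau>
    using that by (auto simp: H_def indicator_def fun_eq_iff)
  have row_out: "(\<lambda>\<tau>. H (t,\<tau>)) = (\<lambda>\<tau>. 0)" "(\<lambda>\<tau>. \<bar>H (t,\<tau>)\<bar>) = (\<lambda>\<tau>. 0)"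
    if "t \<notin> {a..b}" for t
    using that by (auto simp: H_def fun_eq_iff)
  have col_out: "(\<lambda>t. H (t,\<tau>)) = (\<lambda>t. 0)" if "\<tau> \<notin> {a..b}" for \<tau>
    using that by (auto simp: H_def fun_eq_iff)
  have row_meas: "(\<lambda>\<tau>. H (t,\<tau>)) \<in> borel_measurable lborel"
    and row_abs_meas: "(\<lambda>\<tau>. norm (H (t,\<tau>))) \<in> borel_measurable lborel"
    and col_meas: "(\<lambda>t. H (t,\<tau>)) \<in> borel_measurable lborel" for t \<tau>
    by measurable
  have row_lborel: "integrable lborel (\<lambda>\<tau>. H (t,\<tau>))"
    and row_lint: "(LINT \<tau>|lborel. H (t,\<tau>)) = indicator {a..b} t * integral {a..t} (k t)"
    and row_abs_lint: "(LINT \<tau>|lborel. norm (H (t,\<tau>))) \<le> indicator {a..b} t * C" for t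
  proof -
    consider "t \<in> {a..b}" | "t \<notin> {a..b}" by blast
    then have "integrable lborel (\<lambda>\<tau>. H (t,\<tau>))
      \<and> (LINT \<tau>|lborel. H (t,\<tau>)) = indicator {a..b} t * integral {a..t} (k t)
      \<and> (LINT \<tau>|lborel. norm (H (t,\<tau>))) \<le> indicator {a..b} t * C"
    proof cases
      case 1
      have m: "(\<lambda>\<tau>. indicator {a..t} \<tau> * k t \<tau>) \<in> borel_measurable borel"
        using row_meas[of t] unfolding row_eq[OF 1] by simp
      have m': "(\<lambda>\<tau>. indicator {a..t} \<tau> * \<bar>k t \<tau>\<bar>) \<in> borel_measurable borel"
        using row_abs_meas[of t] unfolding row_abs_eq[OF 1] by simp
      have "(\<lambda>\<tau>. \<bar>k t \<tau>\<bar>) absolutely_integrable_on {a..t}"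
        using absolutely_integrable_abs[OF rows[OF 1]] by (simp add: o_def)
      then show ?thesis
        using absolutely_integrable_on_imp_lborel[OF rows[OF 1] m]
          absolutely_integrable_on_imp_lborel(2)[OF _ m'] bound[OF 1] 1
        unfolding row_eq[OF 1] row_abs_eq[OF 1] by simp
    qed (simp add: row_out)
    then show "integrable lborel (\<lambda>\<tau>. H (t,\<tau>))"
      "(LINT \<tau>|lborel. H (t,\<tau>)) = indicator {a..b} t * integral {a..t} (k t)"
      "(LINT \<tau>|lborel. norm (H (t,\<tau>))) \<le> indicator {a..b} t * C" by blast+
  qed
  have col_lint: "(LINT t|lborel. H (t,\<tau>)) = indicator {a..b} \<tau> * integral {\<tau>..b} (\<lambda>t. k t \<tau>)" for \<tau>
  proof (cases "\<tau> \<in> {a..b}")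
    case True
    have "(\<lambda>t. indicator {\<tau>..b} t * k t \<tau>) \<in> borel_measurable borel"
      using col_meas[of \<tau>] unfolding col_eq[OF True] by simp
    then show ?thesis
      using absolutely_integrable_on_imp_lborel(2)[OF cols[OF True]] True unfolding col_eq[OF True] by simp
  qed (simp add: col_out)
  have row_abs_bound: "norm (LINT \<tau>|lborel. norm (H (t,\<tau>))) \<le> norm (indicator {a..b} t * C)" for t
  proof -
    have "0 \<le> (LINT \<tau>|lborel. norm (H (t,\<tau>)))" by simp
    then show ?thesis using row_abs_lint[of t] by (auto simp: indicator_def)
  qed
  have row_abs_integrable: "integrable lborel (\<lambda>t. LINT \<tau>|lborel. norm (H (t,\<tau>)))"
  proof (rule Bochner_Integration.integrable_bound)
    show "integrable lborel (\<lambda>t. indicator {a..b} t * C)"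
      using absolutely_integrable_on_imp_lborel(1)[where g="\<lambda>_. C" and S="{a..b}"]
      by (simp add: absolutely_integrable_continuous_real)
    show "AE t in lborel. norm (LINT \<tau>|lborel. norm (H (t,\<tau>))) \<le> norm (indicator {a..b} t * C)"
      using row_abs_bound by (intro always_eventually allI)
    have "(\<lambda>z. norm (H z)) \<in> borel_measurable (lborel \<Otimes>\<^sub>M lborel)"
      using measurable_compose[OF Hm borel_measurable_norm] by simp
    then show "(\<lambda>t. LINT \<tau>|lborel. norm (H (t,\<tau>))) \<in> borel_measurable lborel"
      by (intro lborel.borel_measurable_lebesgue_integral) (simp add: case_prod_beta)
  qed
  have "integrable (lborel \<Otimes>\<^sub>M lborel) H"
    using Hm row_abs_integrable AE_I2[OF row_lborel] by (rule lborel_pair.Fubini_integrable)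
  then have Hint: "integrable (lborel \<Otimes>\<^sub>M lborel) (case_prod (\<lambda>t \<tau>. H (t,\<tau>)))" by simp
  have cols_int: "((\<lambda>\<tau>. integral {\<tau>..b} (\<lambda>t. k t \<tau>)) has_integral (LINT \<tau>|lborel. LINT t|lborel. H (t,\<tau>))) {a..b}"
    using has_integral_lborel_indicator[of "{a..b}" "\<lambda>\<tau>. integral {\<tau>..b} (\<lambda>t. k t \<tau>)"]
      lborel_pair.integrable_snd[OF Hint] unfolding col_lint by simp
  have rows_int: "((\<lambda>t. integral {a..t} (k t)) has_integral (LINT t|lborel. LINT \<tau>|lborel. H (t,\<tau>))) {a..b}"
    using has_integral_lborel_indicator[of "{a..b}" "\<lambda>t. integral {a..t} (k t)"]
      lborel_pair.integrable_fst[OF Hint] unfolding row_lint by simp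
  show ?thesis
    using integral_unique[OF cols_int] integral_unique[OF rows_int] lborel_pair.Fubini_integral[OF Hint]
    by simp
qed

lemma frac_integral_swap:
  fixes a b \<rho> \<alpha> :: real and f d :: "real \<Rightarrow> real"
  assumes ab: "0 < a" "a \<le> b" and p: "0 < \<rho>" "0 < \<alpha>" "\<alpha> < 1"
    and cf: "continuous_on {a..b} f" and cd: "continuous_on {a..b} d"
  shows "integral {a..b} (\<lambda>t. f t * integral {a..t} (\<lambda>\<tau>. kat_kernel \<alpha> \<rho> t \<tau> * d \<tau>))
       = integral {a..b} (\<lambda>\<tau>. d \<tau> * integral {\<tau>..b} (\<lambda>t. kat_kernel \<alpha> \<rho> t \<tau> * f t))"
proof -
  define k where "k t \<tau> = kat_kernel \<alpha> \<rho> t \<tau> * (d \<tau> * f t)" for t \<tau>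
  obtain Mf where Mf: "\<And>t. t \<in> {a..b} \<Longrightarrow> \<bar>f t\<bar> \<le> Mf"
    using continuous_on_compact_bound[OF compact_Icc cf] by (metis real_norm_def)
  obtain Md where Md: "\<And>t. t \<in> {a..b} \<Longrightarrow> \<bar>d t\<bar> \<le> Md"
    using continuous_on_compact_bound[OF compact_Icc cd] by (metis real_norm_def)
  have "0 \<le> Mf" "0 \<le> Md" using Mf[of a] Md[of a] ab by auto
  define C0 where "C0 = powr_min_slope \<rho> a b powr (-\<alpha>) * ((b-a) powr (1-\<alpha>)/(1-\<alpha>))"
  \<comment> \<open>On the triangle, \<open>f\<close> and \<open>d\<close> agree with their Borel measurable extensions by zero.\<close>
  define f0 where "f0 x = indicator {a..b} x *\<^sub>R f x" for x
  define d0 where "d0 x = indicator {a..b} x *\<^sub>R d x" for x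
  have [measurable]: "f0 \<in> borel_measurable borel" "d0 \<in> borel_measurable borel"
    unfolding f0_def[abs_def] d0_def[abs_def]
    by (rule borel_measurable_continuous_on_indicator[OF _ cf] borel_measurable_continuous_on_indicator[OF _ cd],
        simp)+
  have "(\<lambda>(t,\<tau>). if a \<le> \<tau> \<and> \<tau> \<le> t \<and> t \<le> b then k t \<tau> else 0)
      = (\<lambda>(t,\<tau>). if a \<le> \<tau> \<and> \<tau> \<le> t \<and> t \<le> b then kat_kernel \<alpha> \<rho> t \<tau> * (d0 \<tau> * f0 t) else 0)"
    by (auto simp: fun_eq_iff k_def f0_def d0_def)
  also have "\<dots> \<in> borel_measurable (lborel \<Otimes>\<^sub>M lborel)" by measurable
  finally have Hm: "(\<lambda>(t,\<tau>). if a \<le> \<tau> \<and> \<tau> \<le> t \<and> t \<le> b then k t \<tau> else 0)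
      \<in> borel_measurable (lborel \<Otimes>\<^sub>M lborel)" .
  have cdf: "continuous_on {a..b} (\<lambda>\<tau>. d \<tau> * f t)" "continuous_on {a..b} (\<lambda>t. d \<tau> * f t)" for t \<tau>
    using cf cd by (auto intro!: continuous_intros)
  have rows: "k t absolutely_integrable_on {a..t}" if "t \<in> {a..b}" for t
    using kat_kernel_times_continuous_integrable(1)[OF ab(1) p cdf(1) that] unfolding k_def .
  have cols: "(\<lambda>t. k t \<tau>) absolutely_integrable_on {\<tau>..b}" if "\<tau> \<in> {a..b}" for \<tau>
    using kat_kernel_times_continuous_integrable(2)[OF ab(1) p cdf(2) that] unfolding k_def .
  have bound: "integral {a..t} (\<lambda>\<tau>. \<bar>k t \<tau>\<bar>) \<le> Md * Mf * C0" if t: "t \<in> {a..b}" for t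
  proof -
    have ker: "(\<lambda>\<tau>. kat_kernel \<alpha> \<rho> t \<tau>) absolutely_integrable_on {a..t}"
      and ker_le: "integral {a..t} (\<lambda>\<tau>. kat_kernel \<alpha> \<rho> t \<tau>)
          \<le> powr_min_slope \<rho> a b powr (-\<alpha>) * ((t-a) powr (1-\<alpha>)/(1-\<alpha>))"
      using kat_kernel_absolutely_integrable(1,2)[of a a t b \<rho> \<alpha>] t ab p by auto
    have "integral {a..t} (\<lambda>\<tau>. \<bar>k t \<tau>\<bar>) \<le> integral {a..t} (\<lambda>\<tau>. kat_kernel \<alpha> \<rho> t \<tau> * (Md * Mf))"
    proof (rule integral_le)
      show "(\<lambda>\<tau>. \<bar>k t \<tau>\<bar>) integrable_on {a..t}"
        using absolutely_integrable_abs[OF rows[OF t]] set_lebesgue_integral_eq_integral(1)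
        by (simp add: o_def)
      show "(\<lambda>\<tau>. kat_kernel \<alpha> \<rho> t \<tau> * (Md * Mf)) integrable_on {a..t}"
        using ker set_lebesgue_integral_eq_integral(1) integrable_on_mult_left by blast
      fix \<tau> assume "\<tau> \<in> {a..t}"
      then have "\<bar>d \<tau> * f t\<bar> \<le> Md * Mf"
        unfolding abs_mult using Md Mf t \<open>0 \<le> Mf\<close> \<open>0 \<le> Md\<close> by (intro mult_mono) auto
      then show "\<bar>k t \<tau>\<bar> \<le> kat_kernel \<alpha> \<rho> t \<tau> * (Md * Mf)"
        unfolding k_def abs_mult by (simp add: mult_left_mono)
    qed
    also have "\<dots> = integral {a..t} (\<lambda>\<tau>. kat_kernel \<alpha> \<rho> t \<tau>) * (Md * Mf)" by simp
    also have "\<dots> \<le> C0 * (Md * Mf)"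
    proof (rule mult_right_mono)
      have "(t-a) powr (1-\<alpha>) \<le> (b-a) powr (1-\<alpha>)" using t p by (intro powr_mono2) auto
      then show "integral {a..t} (\<lambda>\<tau>. kat_kernel \<alpha> \<rho> t \<tau>) \<le> C0"
        using ker_le p unfolding C0_def by (smt (verit) divide_right_mono mult_left_mono powr_ge_zero)
    qed (use \<open>0 \<le> Mf\<close> \<open>0 \<le> Md\<close> in simp)
    finally show ?thesis by (simp add: algebra_simps)
  qed
  have "integral {a..b} (\<lambda>t. integral {a..t} (k t)) = integral {a..b} (\<lambda>\<tau>. integral {\<tau>..b} (\<lambda>t. k t \<tau>))"
    using triangle_integral_swap[OF Hm rows cols bound] .
  moreover have "integral {a..t} (k t) = f t * integral {a..t} (\<lambda>\<tau>. kat_kernel \<alpha> \<rho> t \<tau> * d \<tau>)" for t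
  proof -
    have "k t = (\<lambda>\<tau>. f t * (kat_kernel \<alpha> \<rho> t \<tau> * d \<tau>))" by (auto simp: k_def fun_eq_iff)
    then show ?thesis by simp
  qed
  moreover have "integral {\<tau>..b} (\<lambda>t. k t \<tau>) = d \<tau> * integral {\<tau>..b} (\<lambda>t. kat_kernel \<alpha> \<rho> t \<tau> * f t)" for \<tau>
    unfolding k_def by (simp add: algebra_simps flip: integral_mult_left)
  ultimately show ?thesis by simp
qed

definition C1_deriv_on :: "real \<Rightarrow> real \<Rightarrow> (real \<Rightarrow> real) \<Rightarrow> (real \<Rightarrow> real) \<Rightarrow> bool" where
  "C1_deriv_on a b y y' \<longleftrightarrow>
     (\<forall>t\<in>{a..b}. (y has_vector_derivative y' t) (at t within {a..b})) \<and> continuous_on {a..b} y'"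

lemma C1_on_iff_C1_deriv_on: "C1_on a b y \<longleftrightarrow> (\<exists>y'. C1_deriv_on a b y y')"
  unfolding C1_on_def C1_deriv_on_def has_real_derivative_iff_has_vector_derivative ..

lemma C1_deriv_on_vector_derivative:
  "a < b \<Longrightarrow> C1_deriv_on a b y y' \<Longrightarrow> t \<in> {a..b} \<Longrightarrow> vector_derivative y (at t within {a..b}) = y' t"
  unfolding C1_deriv_on_def using vector_derivative_within_closed_interval by blast

lemma C1_deriv_on_imp_continuous_on: "C1_deriv_on a b y y' \<Longrightarrow> continuous_on {a..b} y"
  unfolding C1_deriv_on_def continuous_on_eq_continuous_within
  using has_vector_derivative_continuous by blast

lemma C1_deriv_on_lincomb:
  "C1_deriv_on a b y1 d1 \<Longrightarrow> C1_deriv_on a b y2 d2 \<Longrightarrow>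
    C1_deriv_on a b (\<lambda>t. c1 * y1 t + c2 * y2 t) (\<lambda>t. c1 * d1 t + c2 * d2 t)"
  unfolding C1_deriv_on_def
  by (auto intro!: derivative_eq_intros continuous_intros simp: has_vector_derivative_def fun_eq_iff algebra_simps)

lemma capD_eq:
  assumes "a < b" "C1_deriv_on a b y y'" "t \<in> {a..b}"
  shows "capD \<alpha> \<rho> a b y t = \<rho> powr \<alpha> / Gamma (1 - \<alpha>) * integral {a..t} (\<lambda>\<tau>. kat_kernel \<alpha> \<rho> t \<tau> * y' \<tau>)"
  unfolding capD_def using assms C1_deriv_on_vector_derivative by (auto intro!: integral_cong)

lemma continuous_on_capD:
  assumes "0 < a" "a < b" "0 < \<rho>" "0 < \<alpha>" "\<alpha> < 1" "C1_deriv_on a b y y'"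
  shows "continuous_on {a..b} (capD \<alpha> \<rho> a b y)"
proof -
  have "continuous_on {a..b} (\<lambda>t. \<rho> powr \<alpha> / Gamma (1 - \<alpha>) * integral {a..t} (\<lambda>\<tau>. kat_kernel \<alpha> \<rho> t \<tau> * y' \<tau>))"
    using continuous_on_frac_integral[of a \<rho> \<alpha> b y'] assms
    unfolding C1_deriv_on_def by (intro continuous_on_mult_left) auto
  then show ?thesis by (rule continuous_on_eq) (use capD_eq[OF assms(2,6)] in auto)
qed

lemma capD_lincomb:
  assumes "0 < a" "a < b" "0 < \<rho>" "0 < \<alpha>" "\<alpha> < 1"
    and "C1_deriv_on a b y1 d1" "C1_deriv_on a b y2 d2" "t \<in> {a..b}"
  shows "capD \<alpha> \<rho> a b (\<lambda>t. c1 * y1 t + c2 * y2 t) t = c1 * capD \<alpha> \<rho> a b y1 t + c2 * capD \<alpha> \<rho> a b y2 t"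
proof -
  have int: "(\<lambda>\<tau>. kat_kernel \<alpha> \<rho> t \<tau> * d \<tau>) integrable_on {a..t}" if "C1_deriv_on a b y d" for y d
    using that assms kat_kernel_times_continuous_integrable(1)[of a \<rho> \<alpha> b d t]
    unfolding C1_deriv_on_def by (auto dest: set_lebesgue_integral_eq_integral(1))
  have "integral {a..t} (\<lambda>\<tau>. kat_kernel \<alpha> \<rho> t \<tau> * (c1 * d1 \<tau> + c2 * d2 \<tau>))
     = integral {a..t} (\<lambda>\<tau>. c1 * (kat_kernel \<alpha> \<rho> t \<tau> * d1 \<tau>) + c2 * (kat_kernel \<alpha> \<rho> t \<tau> * d2 \<tau>))"
    by (simp add: algebra_simps)
  also have "\<dots> = c1 * integral {a..t} (\<lambda>\<tau>. kat_kernel \<alpha> \<rho> t \<tau> * d1 \<tau>)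
      + c2 * integral {a..t} (\<lambda>\<tau>. kat_kernel \<alpha> \<rho> t \<tau> * d2 \<tau>)"
    using int[OF assms(6)] int[OF assms(7)] by (simp add: integral_add integrable_on_mult_right)
  finally show ?thesis
    using capD_eq[OF assms(2) C1_deriv_on_lincomb[OF assms(6,7)] assms(8)]
      capD_eq[OF assms(2,6,8)] capD_eq[OF assms(2,7,8)]
    by (simp add: add_divide_distrib algebra_simps)
qed

lemma rightD_lincomb:
  fixes a b \<rho> \<alpha> c :: real and f f1 f2 :: "real \<Rightarrow> real"
  assumes ab: "0 < a" "a < b" and p: "0 < \<rho>" "0 < \<alpha>" "\<alpha> < 1"
    and c1: "continuous_on {a..b} f1" and c2: "continuous_on {a..b} f2"
    and r1: "rightD_exists_cont \<alpha> \<rho> a b f1" and r2: "rightD_exists_cont \<alpha> \<rho> a b f2"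
    and t: "t \<in> {a..b}" and fe: "\<And>s. s \<in> {a..b} \<Longrightarrow> f s = f1 s + c * f2 s"
  shows "rightD \<alpha> \<rho> a b f t = rightD \<alpha> \<rho> a b f1 t + c * rightD \<alpha> \<rho> a b f2 t"
proof -
  define G where "G f s = integral {s..b} (\<lambda>\<tau>. kat_kernel \<alpha> \<rho> \<tau> s * f \<tau>)" for f :: "real \<Rightarrow> real" and s
  let ?G' = "\<lambda>f. vector_derivative (G f) (at t within {a..b})"
  have int: "(\<lambda>\<tau>. kat_kernel \<alpha> \<rho> \<tau> s * f \<tau>) integrable_on {s..b}"
    if "s \<in> {a..b}" "continuous_on {a..b} f" for f s
    using kat_kernel_times_continuous_integrable(2)[OF ab(1) p that(2,1)]
    by (rule set_lebesgue_integral_eq_integral(1))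
  have Geq: "G f s = G f1 s + c * G f2 s" if "s \<in> {a..b}" for s
  proof -
    have "G f s = integral {s..b} (\<lambda>\<tau>. kat_kernel \<alpha> \<rho> \<tau> s * f1 \<tau> + c * (kat_kernel \<alpha> \<rho> \<tau> s * f2 \<tau>))"
      unfolding G_def using that by (intro integral_cong) (auto simp: fe algebra_simps)
    also have "\<dots> = G f1 s + c * G f2 s"
      unfolding G_def using int[OF that c1] int[OF that c2]
      by (simp add: integral_add integrable_on_mult_right)
    finally show ?thesis .
  qed
  have "(G f1 has_vector_derivative ?G' f1) (at t within {a..b})"
    "(G f2 has_vector_derivative ?G' f2) (at t within {a..b})"
    using r1 r2 t unfolding rightD_exists_cont_def G_def[abs_def] by (auto intro: vector_derivative_works[THEN iffD1])
  then have D: "((\<lambda>s. G f1 s + c * G f2 s) has_vector_derivative ?G' f1 + c * ?G' f2) (at t within {a..b})"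
    by (intro has_vector_derivative_add has_vector_derivative_mult_right)
  have "(G f has_vector_derivative ?G' f1 + c * ?G' f2) (at t within {a..b})"
    by (rule has_vector_derivative_transform[OF t Geq D])
  then have "?G' f = ?G' f1 + c * ?G' f2"
    using vector_derivative_within_closed_interval[OF ab(2) t] by blast
  then show ?thesis unfolding rightD_def G_def[abs_def] by (simp add: algebra_simps)
qed

lemma integral_times_capD:
  fixes a b \<rho> \<alpha> :: real and f \<eta> \<eta>' :: "real \<Rightarrow> real"
  assumes ab: "0 < a" "a < b" and p: "0 < \<rho>" "0 < \<alpha>" "\<alpha> < 1"
    and cf: "continuous_on {a..b} f" and C: "C1_deriv_on a b \<eta> \<eta>'"
  shows "integral {a..b} (\<lambda>t. f t * capD \<alpha> \<rho> a b \<eta> t)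
       = \<rho> powr \<alpha> / Gamma (1 - \<alpha>) *
         integral {a..b} (\<lambda>\<tau>. \<eta>' \<tau> * integral {\<tau>..b} (\<lambda>s. kat_kernel \<alpha> \<rho> s \<tau> * f s))"
proof -
  let ?c = "\<rho> powr \<alpha> / Gamma (1 - \<alpha>)"
  have "integral {a..b} (\<lambda>t. f t * capD \<alpha> \<rho> a b \<eta> t)
      = integral {a..b} (\<lambda>t. ?c * (f t * integral {a..t} (\<lambda>\<tau>. kat_kernel \<alpha> \<rho> t \<tau> * \<eta>' \<tau>)))"
    using capD_eq[OF ab(2) C] by (intro integral_cong) auto
  also have "\<dots> = ?c * integral {a..b} (\<lambda>t. f t * integral {a..t} (\<lambda>\<tau>. kat_kernel \<alpha> \<rho> t \<tau> * \<eta>' \<tau>))"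
    by simp
  also have "integral {a..b} (\<lambda>t. f t * integral {a..t} (\<lambda>\<tau>. kat_kernel \<alpha> \<rho> t \<tau> * \<eta>' \<tau>))
      = integral {a..b} (\<lambda>\<tau>. \<eta>' \<tau> * integral {\<tau>..b} (\<lambda>s. kat_kernel \<alpha> \<rho> s \<tau> * f s))"
    using C ab by (intro frac_integral_swap[OF ab(1) _ p cf]) (auto simp: C1_deriv_on_def)
  finally show ?thesis .
qed

text \<open>For \<open>G s = \<integral>\<^sub>s\<^sup>b (\<tau>\<^sup>\<rho> - s\<^sup>\<rho>)\<^sup>-\<^sup>\<alpha> f \<tau> d\<tau>\<close> we have \<open>D\<^sub>b\<^sub>- f = c G'\<close>, so integrating
  \<open>\<eta>' G\<close> by parts in the previous identity gives the claim.\<close>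
lemma capD_integration_by_parts:
  fixes a b \<rho> \<alpha> :: real and f \<eta> \<eta>' :: "real \<Rightarrow> real"
  assumes ab: "0 < a" "a < b" and p: "0 < \<rho>" "0 < \<alpha>" "\<alpha> < 1"
    and cf: "continuous_on {a..b} f" and C: "C1_deriv_on a b \<eta> \<eta>'" and e0: "\<eta> a = 0" "\<eta> b = 0"
    and rd: "rightD_exists_cont \<alpha> \<rho> a b f"
  shows "integral {a..b} (\<lambda>t. f t * capD \<alpha> \<rho> a b \<eta> t) = - integral {a..b} (\<lambda>t. \<eta> t * rightD \<alpha> \<rho> a b f t)"
proof -
  define c where "c = \<rho> powr \<alpha> / Gamma (1 - \<alpha>)"
  have c: "c > 0" unfolding c_def using Gamma_real_pos[of "1-\<alpha>"] p by simp
  define G where "G s = integral {s..b} (\<lambda>\<tau>. kat_kernel \<alpha> \<rho> \<tau> s * f \<tau>)" for s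
  define G' where "G' t = vector_derivative G (at t within {a..b})" for t
  have Gd: "(G has_vector_derivative G' t) (at t within {a..b})" if "t \<in> {a..b}" for t
    using rd that unfolding rightD_exists_cont_def G'_def G_def[abs_def]
    by (auto intro: vector_derivative_works[THEN iffD1])
  have rdG: "rightD \<alpha> \<rho> a b f t = c * G' t" for t
    unfolding rightD_def G'_def G_def[abs_def] c_def by simp
  have cG: "continuous_on {a..b} G"
    unfolding continuous_on_eq_continuous_within using Gd has_vector_derivative_continuous by blast
  have "continuous_on {a..b} (\<lambda>t. (1/c) * rightD \<alpha> \<rho> a b f t)"
    using rd unfolding rightD_exists_cont_def by (intro continuous_on_mult_left) auto
  then have cG': "continuous_on {a..b} G'" using rdG c by simp
  have ce: "continuous_on {a..b} \<eta>" "continuous_on {a..b} \<eta>'"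
    using C1_deriv_on_imp_continuous_on[OF C] C unfolding C1_deriv_on_def by auto
  have ftc: "((\<lambda>t. \<eta> t * G' t + \<eta>' t * G t) has_integral (\<eta> b * G b - \<eta> a * G a)) {a..b}"
    using ab C Gd unfolding C1_deriv_on_def
    by (intro fundamental_theorem_of_calculus) (auto intro!: has_vector_derivative_mult)
  have "(\<lambda>t. \<eta> t * G' t) integrable_on {a..b}" "(\<lambda>t. \<eta>' t * G t) integrable_on {a..b}"
    using ce cG' cG by (auto intro!: integrable_continuous_real continuous_intros)
  from integral_add[OF this] integral_unique[OF ftc] e0
  have "integral {a..b} (\<lambda>t. \<eta>' t * G t) = - integral {a..b} (\<lambda>t. \<eta> t * G' t)" by simp
  then show ?thesis
    using integral_times_capD[OF ab p cf C] unfolding G_def[symmetric] c_def[symmetric]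
    by (simp add: rdG algebra_simps)
qed

lemma has_derivative_of_partials:
  fixes G :: "real \<Rightarrow> real \<Rightarrow> real"
  assumes d2: "\<And>u v. (\<lambda>w. G w v) differentiable (at u)"
    and d3: "\<And>u v. (\<lambda>w. G u w) differentiable (at v)"
    and c3: "continuous_on UNIV (\<lambda>(u,v). deriv (\<lambda>w. G u w) v)"
  shows "((\<lambda>(u,v). G u v) has_derivative
           (\<lambda>(hu,hv). deriv (\<lambda>w. G w v) u * hu + deriv (\<lambda>w. G u w) v * hv)) (at (u,v))"
proof -
  have D2: "((\<lambda>w. G w v) has_derivative (\<lambda>h. deriv (\<lambda>w. G w v) u * h)) (at u within UNIV)"
    using d2 DERIV_deriv_iff_real_differentiable[of "\<lambda>w. G w v" u]
    unfolding has_field_derivative_def by auto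
  have D3: "((\<lambda>w. G x w) has_derivative blinfun_apply (deriv (\<lambda>w. G x w) y *\<^sub>R id_blinfun)) (at y within UNIV)"
    for x y
  proof -
    have "((\<lambda>w. G x w) has_derivative (\<lambda>h. deriv (\<lambda>w. G x w) y * h)) (at y)"
      using d3 DERIV_deriv_iff_real_differentiable[of "\<lambda>w. G x w" y]
      unfolding has_field_derivative_def by auto
    then show ?thesis by (simp add: scaleR_blinfun.rep_eq)
  qed
  have "continuous_on (UNIV \<times> UNIV)
      (\<lambda>(x, y). deriv (\<lambda>w. G x w) y *\<^sub>R (id_blinfun :: real \<Rightarrow>\<^sub>L real))"
    using c3 by (auto simp: split_beta intro!: continuous_intros)
  then have C3: "continuous (at (u, v) within UNIV \<times> UNIV)
      (\<lambda>(x, y). deriv (\<lambda>w. G x w) y *\<^sub>R (id_blinfun :: real \<Rightarrow>\<^sub>L real))"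
    unfolding continuous_on_eq_continuous_within by blast
  from has_derivative_partialsI[OF D2 D3 C3] show ?thesis
    by (simp add: split_beta' scaleR_blinfun.rep_eq)
qed

lemma lagrangian_okD:
  assumes "lagrangian_ok \<alpha> \<rho> a b F"
  shows "continuous_on ({a..b} \<times> UNIV \<times> UNIV) (\<lambda>(t,u,v). F t u v)"
    "\<And>t u v. t \<in> {a..b} \<Longrightarrow> (\<lambda>w. F t w v) differentiable (at u)"
    "\<And>t u v. t \<in> {a..b} \<Longrightarrow> (\<lambda>w. F t u w) differentiable (at v)"
    "continuous_on ({a..b} \<times> UNIV \<times> UNIV) (\<lambda>(t,u,v). partial2 F t u v)"
    "continuous_on ({a..b} \<times> UNIV \<times> UNIV) (\<lambda>(t,u,v). partial3 F t u v)"
    "\<And>y. C1_on a b y \<Longrightarrow> rightD_exists_cont \<alpha> \<rho> a b (\<lambda>t. partial3 F t (y t) (capD \<alpha> \<rho> a b y t))"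
  using assms unfolding lagrangian_ok_def by auto

lemma continuous_on_compose3:
  assumes "continuous_on ({a..b} \<times> UNIV \<times> UNIV) (\<lambda>(t,u,v). G t u v)"
    and "continuous_on T \<tau>" "continuous_on T \<phi>" "continuous_on T \<psi>" "\<tau> ` T \<subseteq> {a..b}"
  shows "continuous_on T (\<lambda>z. G (\<tau> z) (\<phi> z) (\<psi> z))"
proof -
  have "continuous_on T (\<lambda>z. (\<lambda>(t,u,v). G t u v) (\<tau> z, \<phi> z, \<psi> z))"
    by (rule continuous_on_compose2[OF assms(1)]) (use assms in \<open>auto intro!: continuous_intros\<close>)
  then show ?thesis by simp
qed

lemma continuous_on_compose_along:
  assumes "continuous_on ({a..b} \<times> UNIV \<times> UNIV) (\<lambda>(t,u,v). G t u v)"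
    and "continuous_on {a..b} \<phi>" "continuous_on {a..b} \<psi>"
  shows "continuous_on {a..b} (\<lambda>t. G t (\<phi> t) (\<psi> t))"
  using continuous_on_compose3[OF assms(1) continuous_on_id assms(2,3)] by simp

lemma partial_lagrangian_has_derivative:
  fixes F :: "real \<Rightarrow> real \<Rightarrow> real \<Rightarrow> real"
  assumes "lagrangian_ok \<alpha> \<rho> a b F" "t \<in> {a..b}"
  shows "((\<lambda>(u,v). F t u v) has_derivative
           (\<lambda>(hu,hv). partial2 F t u v * hu + partial3 F t u v * hv)) (at (u,v))"
proof -
  have "continuous_on UNIV (\<lambda>(u,v). partial3 F t u v)"
    using continuous_on_compose3[OF lagrangian_okD(5)[OF assms(1)], of UNIV "\<lambda>_. t" fst snd] assms(2)
    by (simp add: continuous_on_fst continuous_on_snd split_beta)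
  then show ?thesis
    using has_derivative_of_partials[of "F t"] lagrangian_okD(2,3)[OF assms(1,2)]
    unfolding partial2_def partial3_def by blast
qed

lemma partial_lincomb:
  fixes L g :: "real \<Rightarrow> real \<Rightarrow> real \<Rightarrow> real"
  assumes "(\<lambda>w. L t w v) differentiable (at u)" "(\<lambda>w. g t w v) differentiable (at u)"
    "(\<lambda>w. L t u w) differentiable (at v)" "(\<lambda>w. g t u w) differentiable (at v)"
  shows "partial2 (\<lambda>t u v. L t u v + c * g t u v) t u v = partial2 L t u v + c * partial2 g t u v"
    and "partial3 (\<lambda>t u v. L t u v + c * g t u v) t u v = partial3 L t u v + c * partial3 g t u v"
  using assms unfolding partial2_def partial3_def
  by (auto intro!: DERIV_imp_deriv DERIV_add DERIV_cmult simp flip: DERIV_deriv_iff_real_differentiable)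

lemma has_derivative_integral_variation:
  fixes F :: "real \<Rightarrow> real \<Rightarrow> real \<Rightarrow> real" and u0 v0 p1 p2 q1 q2 :: "real \<Rightarrow> real"
  defines "U \<equiv> \<lambda>e t. u0 t + fst e * p1 t + snd e * p2 t"
    and "V \<equiv> \<lambda>e t. v0 t + fst e * q1 t + snd e * q2 t"
  assumes F: "lagrangian_ok \<alpha> \<rho> a b F"
    and cu: "continuous_on {a..b} u0" "continuous_on {a..b} v0" "continuous_on {a..b} p1"
      "continuous_on {a..b} p2" "continuous_on {a..b} q1" "continuous_on {a..b} q2"
  shows "((\<lambda>e. integral {a..b} (\<lambda>t. F t (U e t) (V e t))) has_derivative
     (\<lambda>h. fst h * integral {a..b} (\<lambda>t. partial2 F t (U e t) (V e t) * p1 t + partial3 F t (U e t) (V e t) * q1 t)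
        + snd h * integral {a..b} (\<lambda>t. partial2 F t (U e t) (V e t) * p2 t + partial3 F t (U e t) (V e t) * q2 t))) (at e)"
proof -
  note cF = lagrangian_okD(1)[OF F] and c2 = lagrangian_okD(4)[OF F] and c3 = lagrangian_okD(5)[OF F]
  define c1 where "c1 e t = partial2 F t (U e t) (V e t) * p1 t + partial3 F t (U e t) (V e t) * q1 t" for e t
  define c2' where "c2' e t = partial2 F t (U e t) (V e t) * p2 t + partial3 F t (U e t) (V e t) * q2 t" for e t
  define fx where "fx e t = c1 e t *\<^sub>R (fst_blinfun::(real\<times>real) \<Rightarrow>\<^sub>L real) + c2' e t *\<^sub>R snd_blinfun" for e t
  have fxa: "blinfun_apply (fx e t) = (\<lambda>h. c1 e t * fst h + c2' e t * snd h)" for e t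
    by (auto simp: fx_def fun_eq_iff blinfun.add_left scaleR_blinfun.rep_eq)
  have snd_comp: "continuous_on (UNIV \<times> {a..b}) (\<lambda>z. h (snd z))" if "continuous_on {a..b} h" for h :: "real \<Rightarrow> real"
    by (rule continuous_on_compose2[OF that]) (auto intro: continuous_intros)
  have cUV: "continuous_on (UNIV \<times> {a..b}) (\<lambda>z. U (fst z) (snd z))"
    "continuous_on (UNIV \<times> {a..b}) (\<lambda>z. V (fst z) (snd z))"
    unfolding U_def V_def using cu by (auto intro!: continuous_intros snd_comp)
  have img: "snd ` (UNIV \<times> {a..b}) \<subseteq> {a..b}" by auto
  have cP: "continuous_on (UNIV \<times> {a..b}) (\<lambda>z. partial2 F (snd z) (U (fst z) (snd z)) (V (fst z) (snd z)))"
    "continuous_on (UNIV \<times> {a..b}) (\<lambda>z. partial3 F (snd z) (U (fst z) (snd z)) (V (fst z) (snd z)))"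
    using continuous_on_compose3[OF c2 continuous_on_snd cUV img]
      continuous_on_compose3[OF c3 continuous_on_snd cUV img] by auto
  have "continuous_on (UNIV \<times> {a..b}) (\<lambda>z. c1 (fst z) (snd z))"
    "continuous_on (UNIV \<times> {a..b}) (\<lambda>z. c2' (fst z) (snd z))"
    unfolding c1_def c2'_def using cP cu by (auto intro!: continuous_intros snd_comp)
  then have cfx: "continuous_on (UNIV \<times> cbox a b) (\<lambda>(e, t). fx e t)"
    unfolding fx_def split_beta by (auto intro!: continuous_intros)
  have cUVt: "continuous_on {a..b} (U e)" "continuous_on {a..b} (V e)" for e
    unfolding U_def V_def using cu by (auto intro!: continuous_intros)
  have cct: "continuous_on {a..b} (c1 e)" "continuous_on {a..b} (c2' e)" for e
    unfolding c1_def[abs_def] c2'_def[abs_def]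
    using continuous_on_compose_along[OF c2 cUVt(1)[of e] cUVt(2)[of e]]
      continuous_on_compose_along[OF c3 cUVt(1)[of e] cUVt(2)[of e]] cu
    by (auto intro!: continuous_intros)
  have pd: "((\<lambda>e. F t (U e t) (V e t)) has_derivative blinfun_apply (fx e t)) (at e within UNIV)"
    if t: "t \<in> cbox a b" for e t
  proof -
    have inner: "((\<lambda>e. (U e t, V e t)) has_derivative
        (\<lambda>h. (fst h * p1 t + snd h * p2 t, fst h * q1 t + snd h * q2 t))) (at e)"
      unfolding U_def V_def by (auto intro!: derivative_eq_intros)
    from has_derivative_compose[OF inner partial_lagrangian_has_derivative[OF F]] t
    have "((\<lambda>e. F t (U e t) (V e t)) has_derivative (\<lambda>h. partial2 F t (U e t) (V e t) * (fst h * p1 t + snd h * p2 t)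
        + partial3 F t (U e t) (V e t) * (fst h * q1 t + snd h * q2 t))) (at e)" by simp
    moreover have "(\<lambda>h. partial2 F t (U e t) (V e t) * (fst h * p1 t + snd h * p2 t)
        + partial3 F t (U e t) (V e t) * (fst h * q1 t + snd h * q2 t)) = blinfun_apply (fx e t)"
      unfolding fxa c1_def c2'_def by (auto simp: fun_eq_iff algebra_simps)
    ultimately show ?thesis by simp
  qed
  have "(\<lambda>t. F t (U e t) (V e t)) integrable_on cbox a b" for e
    using integrable_continuous_real[OF continuous_on_compose_along[OF cF cUVt(1)[of e] cUVt(2)[of e]]] by simp
  from leibniz_rule[where f="\<lambda>e t. F t (U e t) (V e t)" and U=UNIV and fx=fx, OF pd this cfx]
  have L: "((\<lambda>e. integral (cbox a b) (\<lambda>t. F t (U e t) (V e t))) has_derivative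
      blinfun_apply (integral (cbox a b) (fx e))) (at e)"
    by simp
  have "(c1 e has_integral integral {a..b} (c1 e)) {a..b}" "(c2' e has_integral integral {a..b} (c2' e)) {a..b}"
    using integrable_continuous_real[OF cct(1)[of e]] integrable_continuous_real[OF cct(2)[of e]]
    by (blast intro: integrable_integral)+
  then have "(fx e has_integral (integral {a..b} (c1 e) *\<^sub>R fst_blinfun + integral {a..b} (c2' e) *\<^sub>R snd_blinfun)) {a..b}"
    unfolding fx_def by (intro has_integral_add has_integral_scaleR_left)
  then have "blinfun_apply (integral (cbox a b) (fx e))
      = (\<lambda>h. fst h * integral {a..b} (c1 e) + snd h * integral {a..b} (c2' e))"
    by (auto simp: integral_unique fun_eq_iff blinfun.add_left scaleR_blinfun.rep_eq)
  then show ?thesis using L unfolding c1_def c2'_def by (simp add: mult.commute)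
qed

lemma has_real_derivative_max0_square: "((\<lambda>u::real. (max 0 u)^2) has_real_derivative 2 * max 0 u) (at u)"
proof -
  consider "u < 0" | "u = 0" | "u > 0" by linarith
  then show ?thesis
  proof cases
    case 1
    have "((\<lambda>u::real. 0) has_real_derivative 2 * max 0 u) (at u)" using 1 by simp
    then show ?thesis
      by (rule has_field_derivative_transform_within_open[where S="{..<0}"]) (use 1 in auto)
  next
    case 2
    have "\<forall>\<^sub>F y in at 0. norm (((max 0 y)^2 - (max 0 0)^2) / (y - 0)) \<le> \<bar>y::real\<bar>"
      by (intro always_eventually allI) (auto simp: power2_eq_square abs_if max_def)
    moreover have "((\<lambda>y::real. \<bar>y\<bar>) \<longlongrightarrow> 0) (at 0)"
      using tendsto_rabs[OF tendsto_ident_at, of "0::real" UNIV] by simp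
    ultimately have "((\<lambda>y. ((max 0 y)^2 - (max 0 0)^2) / (y - 0)) \<longlongrightarrow> 0) (at (0::real))"
      by (rule Lim_null_comparison)
    then show ?thesis using 2 by (simp add: has_field_derivative_iff)
  next
    case 3
    have "((\<lambda>u::real. u^2) has_real_derivative 2 * max 0 u) (at u)"
      using 3 by (auto intro!: derivative_eq_intros)
    then show ?thesis
      by (rule has_field_derivative_transform_within_open[where S="{0<..}"]) (use 3 in auto)
  qed
qed

definition bump :: "real \<Rightarrow> real \<Rightarrow> real \<Rightarrow> real" where
  "bump c d t = (max 0 ((t - c) * (d - t)))^2"

lemma C1_deriv_on_bump:
  "C1_deriv_on a b (bump c d) (\<lambda>t. 2 * max 0 ((t - c) * (d - t)) * ((d - t) - (t - c)))"
proof -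
  have "(bump c d has_real_derivative 2 * max 0 ((t - c) * (d - t)) * ((d - t) - (t - c))) (at t)" for t
  proof -
    have "((\<lambda>t. (t - c) * (d - t)) has_real_derivative (d - t) - (t - c)) (at t)"
      by (auto intro!: derivative_eq_intros)
    from DERIV_chain2[OF has_real_derivative_max0_square this] show ?thesis
      unfolding bump_def[abs_def] by (simp add: mult.assoc)
  qed
  then show ?thesis
    unfolding C1_deriv_on_def
    by (auto simp flip: has_real_derivative_iff_has_vector_derivative
        intro: has_field_derivative_at_within intro!: continuous_intros)
qed

lemma bump_eq_0: "t \<notin> {c<..<d} \<Longrightarrow> c < d \<Longrightarrow> bump c d t = 0"
  by (cases "t \<le> c") (auto simp: bump_def mult_nonpos_nonneg mult_nonneg_nonpos)

lemma bump_pos: "t \<in> {c<..<d} \<Longrightarrow> bump c d t > 0"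
  by (auto simp: bump_def)

lemma exists_bump_integral_nonzero:
  fixes a b :: real and E :: "real \<Rightarrow> real"
  assumes ab: "a < b" and cE: "continuous_on {a..b} E" and t0: "t0 \<in> {a..b}" and E0: "E t0 \<noteq> 0"
  obtains \<eta> \<eta>' where "C1_deriv_on a b \<eta> \<eta>'" "\<eta> a = 0" "\<eta> b = 0" "integral {a..b} (\<lambda>t. \<eta> t * E t) \<noteq> 0"
proof -
  obtain \<delta> where \<delta>: "\<delta> > 0" "\<And>t. t \<in> {a..b} \<Longrightarrow> dist t t0 < \<delta> \<Longrightarrow> dist (E t) (E t0) < \<bar>E t0\<bar>"
    using cE t0 E0 unfolding continuous_on_iff by (metis zero_less_abs_iff)
  define c where "c = max a (t0 - \<delta>/2)"
  define d where "d = min b (t0 + \<delta>/2)"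
  have cd: "a \<le> c" "c < d" "d \<le> b" using t0 ab \<delta> by (auto simp: c_def d_def)
  have sgn: "E t * E t0 > 0" if "t \<in> {c..d}" for t
  proof -
    have "\<bar>E t - E t0\<bar> < \<bar>E t0\<bar>"
      using that cd t0 \<delta> by (auto simp: c_def d_def dist_real_def)
    then show ?thesis by (smt (verit) mult_neg_neg mult_pos_pos)
  qed
  let ?g = "\<lambda>t. E t0 * (bump c d t * E t)"
  have cg: "continuous_on {a..b} ?g" unfolding bump_def using cE by (intro continuous_intros)
  have gnn: "0 \<le> ?g t" if "t \<in> {a..b}" for t
  proof (cases "t \<in> {c<..<d}")
    case True
    then have "0 \<le> (E t * E t0) * bump c d t" using sgn[of t] bump_pos[of t c d] by simp
    then show ?thesis by (simp add: algebra_simps)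
  qed (use bump_eq_0 cd in simp)
  define m where "m = (c + d) / 2"
  have m: "m \<in> {c<..<d}" "m \<in> {a..b}" using cd by (auto simp: m_def)
  then have gm: "?g m \<noteq> 0" using sgn[of m] bump_pos[of m c d] by auto
  have "integral {a..b} ?g \<noteq> 0"
  proof
    assume "integral {a..b} ?g = 0"
    then have "(?g has_integral 0) (cbox a b)"
      using integrable_continuous_real[OF cg] by (metis box_real(2) integrable_integral)
    from has_integral_0_cbox_imp_0[OF _ _ this, of m] cg gnn m gm ab
    show False by (auto simp: box_real)
  qed
  then have "integral {a..b} (\<lambda>t. bump c d t * E t) \<noteq> 0" by simp
  moreover have "bump c d a = 0" "bump c d b = 0" using bump_eq_0 cd by auto
  ultimately show ?thesis using that[OF C1_deriv_on_bump] by blast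
qed

lemma fundamental_lemma_of_variations:
  fixes a b :: real and E :: "real \<Rightarrow> real"
  assumes "a < b" "continuous_on {a..b} E"
    and "\<And>\<eta> \<eta>'. C1_deriv_on a b \<eta> \<eta>' \<Longrightarrow> \<eta> a = 0 \<Longrightarrow> \<eta> b = 0 \<Longrightarrow> integral {a..b} (\<lambda>t. \<eta> t * E t) = 0"
    and "t \<in> {a..b}"
  shows "E t = 0"
  using exists_bump_integral_nonzero[OF assms(1,2,4)] assms(3) by metis

definition el_residual ::
    "real \<Rightarrow> real \<Rightarrow> real \<Rightarrow> real \<Rightarrow> (real \<Rightarrow> real \<Rightarrow> real \<Rightarrow> real) \<Rightarrow> (real \<Rightarrow> real) \<Rightarrow> real \<Rightarrow> real" where
  "el_residual \<alpha> \<rho> a b F x t = partial2 F t (x t) (capD \<alpha> \<rho> a b x t)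
     - rightD \<alpha> \<rho> a b (\<lambda>s. partial3 F s (x s) (capD \<alpha> \<rho> a b x s)) t"

lemma euler_lagrange_iff_el_residual:
  "euler_lagrange \<alpha> \<rho> a b F x \<longleftrightarrow> (\<forall>t\<in>{a..b}. el_residual \<alpha> \<rho> a b F x t = 0)"
  unfolding euler_lagrange_def el_residual_def ..

lemma continuous_on_el_residual:
  assumes "0 < a" "a < b" "0 < \<rho>" "0 < \<alpha>" "\<alpha> < 1"
    and F: "lagrangian_ok \<alpha> \<rho> a b F" and x: "C1_deriv_on a b x x'"
  shows "continuous_on {a..b} (el_residual \<alpha> \<rho> a b F x)"
proof -
  note cx = C1_deriv_on_imp_continuous_on[OF x] and cD = continuous_on_capD[OF assms(1-5) x]
  have "rightD_exists_cont \<alpha> \<rho> a b (\<lambda>t. partial3 F t (x t) (capD \<alpha> \<rho> a b x t))"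
    using lagrangian_okD(6)[OF F] x C1_on_iff_C1_deriv_on by blast
  then show ?thesis
    unfolding el_residual_def[abs_def] rightD_exists_cont_def
    using continuous_on_compose_along[OF lagrangian_okD(4)[OF F] cx cD]
    by (auto intro!: continuous_intros)
qed

lemma first_variation:
  fixes a b \<rho> \<alpha> :: real and F :: "real \<Rightarrow> real \<Rightarrow> real \<Rightarrow> real" and x x' \<eta> \<eta>' :: "real \<Rightarrow> real"
  assumes ab: "0 < a" "a < b" and p: "0 < \<rho>" "0 < \<alpha>" "\<alpha> < 1"
    and F: "lagrangian_ok \<alpha> \<rho> a b F" and x: "C1_deriv_on a b x x'" and \<eta>: "C1_deriv_on a b \<eta> \<eta>'"
    and e0: "\<eta> a = 0" "\<eta> b = 0"
  shows "integral {a..b} (\<lambda>t. partial2 F t (x t) (capD \<alpha> \<rho> a b x t) * \<eta> t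
            + partial3 F t (x t) (capD \<alpha> \<rho> a b x t) * capD \<alpha> \<rho> a b \<eta> t)
       = integral {a..b} (\<lambda>t. \<eta> t * el_residual \<alpha> \<rho> a b F x t)"
proof -
  let ?P2 = "\<lambda>t. partial2 F t (x t) (capD \<alpha> \<rho> a b x t)"
  let ?P3 = "\<lambda>t. partial3 F t (x t) (capD \<alpha> \<rho> a b x t)"
  note cx = C1_deriv_on_imp_continuous_on[OF x] and cD = continuous_on_capD[OF ab p x]
  have ce: "continuous_on {a..b} \<eta>" "continuous_on {a..b} (capD \<alpha> \<rho> a b \<eta>)"
    using C1_deriv_on_imp_continuous_on[OF \<eta>] continuous_on_capD[OF ab p \<eta>] by auto
  have cP: "continuous_on {a..b} ?P2" "continuous_on {a..b} ?P3"
    using continuous_on_compose_along[OF lagrangian_okD(4)[OF F] cx cD]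
      continuous_on_compose_along[OF lagrangian_okD(5)[OF F] cx cD] by auto
  have rd: "rightD_exists_cont \<alpha> \<rho> a b ?P3"
    using lagrangian_okD(6)[OF F] x C1_on_iff_C1_deriv_on by blast
  then have crd: "continuous_on {a..b} (rightD \<alpha> \<rho> a b ?P3)" unfolding rightD_exists_cont_def by auto
  have i1: "(\<lambda>t. ?P2 t * \<eta> t) integrable_on {a..b}"
    and i2: "(\<lambda>t. ?P3 t * capD \<alpha> \<rho> a b \<eta> t) integrable_on {a..b}"
    and i3: "(\<lambda>t. \<eta> t * rightD \<alpha> \<rho> a b ?P3 t) integrable_on {a..b}"
    using cP ce crd by (auto intro!: integrable_continuous_real continuous_intros)
  have "integral {a..b} (\<lambda>t. ?P2 t * \<eta> t + ?P3 t * capD \<alpha> \<rho> a b \<eta> t)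
      = integral {a..b} (\<lambda>t. ?P2 t * \<eta> t) + integral {a..b} (\<lambda>t. ?P3 t * capD \<alpha> \<rho> a b \<eta> t)"
    by (rule integral_add[OF i1 i2])
  also have "\<dots> = integral {a..b} (\<lambda>t. ?P2 t * \<eta> t) - integral {a..b} (\<lambda>t. \<eta> t * rightD \<alpha> \<rho> a b ?P3 t)"
    using capD_integration_by_parts[OF ab p cP(2) \<eta> e0 rd] by simp
  also have "\<dots> = integral {a..b} (\<lambda>t. \<eta> t * el_residual \<alpha> \<rho> a b F x t)"
    unfolding el_residual_def integral_diff[OF i1 i3, symmetric] by (simp add: algebra_simps)
  finally show ?thesis .
qed

lemma el_residual_lincomb:
  assumes ab: "0 < a" "a < b" and p: "0 < \<rho>" "0 < \<alpha>" "\<alpha> < 1"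
    and L: "lagrangian_ok \<alpha> \<rho> a b L" and g: "lagrangian_ok \<alpha> \<rho> a b g"
    and x: "C1_deriv_on a b x x'" and t: "t \<in> {a..b}"
  shows "el_residual \<alpha> \<rho> a b (\<lambda>t u v. L t u v + c * g t u v) x t
       = el_residual \<alpha> \<rho> a b L x t + c * el_residual \<alpha> \<rho> a b g x t"
proof -
  let ?D = "capD \<alpha> \<rho> a b x"
  note cx = C1_deriv_on_imp_continuous_on[OF x] and cD = continuous_on_capD[OF ab p x]
  have x1: "C1_on a b x" using x C1_on_iff_C1_deriv_on by blast
  have pc: "partial2 (\<lambda>t u v. L t u v + c * g t u v) s u v = partial2 L s u v + c * partial2 g s u v"
    "partial3 (\<lambda>t u v. L t u v + c * g t u v) s u v = partial3 L s u v + c * partial3 g s u v"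
    if "s \<in> {a..b}" for s u v
    using partial_lincomb[where L=L and g=g and t=s and u=u and v=v and c=c, OF lagrangian_okD(2)[OF L that] lagrangian_okD(2)[OF g that]
        lagrangian_okD(3)[OF L that] lagrangian_okD(3)[OF g that]] .
  have "rightD \<alpha> \<rho> a b (\<lambda>s. partial3 (\<lambda>t u v. L t u v + c * g t u v) s (x s) (?D s)) t
      = rightD \<alpha> \<rho> a b (\<lambda>s. partial3 L s (x s) (?D s)) t + c * rightD \<alpha> \<rho> a b (\<lambda>s. partial3 g s (x s) (?D s)) t"
    by (rule rightD_lincomb[OF ab p continuous_on_compose_along[OF lagrangian_okD(5)[OF L] cx cD]
          continuous_on_compose_along[OF lagrangian_okD(5)[OF g] cx cD]
          lagrangian_okD(6)[OF L x1] lagrangian_okD(6)[OF g x1] t pc(2)])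
  then show ?thesis unfolding el_residual_def pc(1)[OF t] by (simp add: algebra_simps)
qed

lemma det2_open_mapping:
  fixes \<Phi> :: "real \<times> real \<Rightarrow> real \<times> real" and A1 A2 B1 B2 r :: real
  assumes "continuous_on UNIV \<Phi>"
    and "(\<Phi> has_derivative (\<lambda>h. (fst h * A1 + snd h * A2, fst h * B1 + snd h * B2))) (at 0)"
    and det: "A1 * B2 - A2 * B1 \<noteq> 0" and "0 < r"
  shows "\<Phi> 0 \<in> interior (\<Phi> ` ball 0 r)"
proof -
  define \<Delta> where "\<Delta> = A1 * B2 - A2 * B1"
  define g' where
    "g' w = inverse \<Delta> *\<^sub>R (B2 * fst w - A2 * snd w, A1 * snd w - B1 * fst w)" for w :: "real \<times> real"
  have "bounded_linear (\<lambda>w::real \<times> real. c1 * fst w + c2 * snd w)" for c1 c2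
    by (intro bounded_linear_add bounded_linear_compose[OF bounded_linear_mult_right]
        bounded_linear_fst bounded_linear_snd)
  from bounded_linear_Pair[OF this this, of B2 "-A2" "-B1" A1]
  have "bounded_linear g'"
    unfolding g'_def by (intro bounded_linear_compose[OF bounded_linear_scaleR_right]) simp
  moreover have "(\<lambda>h. (fst h * A1 + snd h * A2, fst h * B1 + snd h * B2)) \<circ> g' = id"
  proof
    fix w :: "real \<times> real"
    have "\<Delta> \<noteq> 0" using det unfolding \<Delta>_def .
    moreover have "(fst (g' w) * A1 + snd (g' w) * A2, fst (g' w) * B1 + snd (g' w) * B2)
        = (inverse \<Delta> * (\<Delta> * fst w), inverse \<Delta> * (\<Delta> * snd w))"
      by (simp add: g'_def \<Delta>_def algebra_simps)
    ultimately show "((\<lambda>h. (fst h * A1 + snd h * A2, fst h * B1 + snd h * B2)) \<circ> g') w = id w"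
      by (simp add: mult.assoc[symmetric])
  qed
  ultimately show ?thesis
    using sussmann_open_mapping[OF open_UNIV assms(1) UNIV_I assms(2)] \<open>0 < r\<close>
    by (simp add: interior_open)
qed

lemma frac_norm_lincomb_le:
  assumes "0 < a" "a < b" "0 < \<rho>" "0 < \<alpha>" "\<alpha> < 1"
    and \<eta>1: "C1_deriv_on a b \<eta>1 \<eta>1'" and \<eta>2: "C1_deriv_on a b \<eta>2 \<eta>2'"
  obtains N where "0 \<le> N" "\<And>e. frac_norm \<alpha> \<rho> a b (\<lambda>t. fst e * \<eta>1 t + snd e * \<eta>2 t) \<le> N * norm e"
proof -
  let ?D = "capD \<alpha> \<rho> a b"
  have "continuous_on {a..b} (\<lambda>t. \<bar>\<eta>1 t\<bar> + \<bar>\<eta>2 t\<bar> + \<bar>?D \<eta>1 t\<bar> + \<bar>?D \<eta>2 t\<bar>)"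
    using C1_deriv_on_imp_continuous_on[OF \<eta>1] C1_deriv_on_imp_continuous_on[OF \<eta>2]
      continuous_on_capD[OF assms(1-5) \<eta>1] continuous_on_capD[OF assms(1-5) \<eta>2]
    by (intro continuous_intros)
  then obtain M where "0 \<le> M"
    and M: "\<And>t. t \<in> {a..b} \<Longrightarrow> norm (\<bar>\<eta>1 t\<bar> + \<bar>\<eta>2 t\<bar> + \<bar>?D \<eta>1 t\<bar> + \<bar>?D \<eta>2 t\<bar>) \<le> M"
    using continuous_on_compact_bound[OF compact_Icc] by blast
  have lincomb_le: "\<bar>fst e * p + snd e * q\<bar> \<le> norm e * (\<bar>p\<bar> + \<bar>q\<bar>)" for e :: "real \<times> real" and p q
  proof -
    have "\<bar>fst e * p + snd e * q\<bar> \<le> \<bar>fst e\<bar> * \<bar>p\<bar> + \<bar>snd e\<bar> * \<bar>q\<bar>"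
      by (simp add: abs_mult[symmetric] abs_triangle_ineq)
    also have "\<dots> \<le> norm e * \<bar>p\<bar> + norm e * \<bar>q\<bar>"
      using norm_fst_le[of "fst e" "snd e"] norm_snd_le[of "snd e" "fst e"]
      by (intro add_mono mult_right_mono) auto
    finally show ?thesis by (simp add: algebra_simps)
  qed
  have "frac_norm \<alpha> \<rho> a b (\<lambda>t. fst e * \<eta>1 t + snd e * \<eta>2 t) \<le> 2 * M * norm e" for e :: "real \<times> real"
  proof -
    let ?w = "\<lambda>t. fst e * \<eta>1 t + snd e * \<eta>2 t"
    have "\<bar>?w t\<bar> \<le> norm e * M" "\<bar>?D ?w t\<bar> \<le> norm e * M" if "t \<in> {a..b}" for t
    proof -
      have "\<bar>\<eta>1 t\<bar> + \<bar>\<eta>2 t\<bar> \<le> M" "\<bar>?D \<eta>1 t\<bar> + \<bar>?D \<eta>2 t\<bar> \<le> M"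
        using M[OF that] by (simp_all add: abs_of_nonneg)
      then have "norm e * (\<bar>\<eta>1 t\<bar> + \<bar>\<eta>2 t\<bar>) \<le> norm e * M"
        "norm e * (\<bar>?D \<eta>1 t\<bar> + \<bar>?D \<eta>2 t\<bar>) \<le> norm e * M"
        by (simp_all add: mult_left_mono)
      then show "\<bar>?w t\<bar> \<le> norm e * M" "\<bar>?D ?w t\<bar> \<le> norm e * M"
        using lincomb_le[of e "\<eta>1 t" "\<eta>2 t"] lincomb_le[of e "?D \<eta>1 t" "?D \<eta>2 t"]
          capD_lincomb[OF assms that] by simp_all

    qed
    then have "(SUP t\<in>{a..b}. \<bar>?w t\<bar>) \<le> norm e * M" "(SUP t\<in>{a..b}. \<bar>?D ?w t\<bar>) \<le> norm e * M"
      using assms by (auto intro!: cSUP_least)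
    then show ?thesis unfolding frac_norm_def by (simp add: algebra_simps)
  qed
  then show ?thesis using that[of "2 * M"] \<open>0 \<le> M\<close> by simp
qed

lemma functional_variation_eq:
  assumes "0 < a" "a < b" "0 < \<rho>" "0 < \<alpha>" "\<alpha> < 1"
    and x: "C1_deriv_on a b x x'" and \<eta>1: "C1_deriv_on a b \<eta>1 \<eta>1'" and \<eta>2: "C1_deriv_on a b \<eta>2 \<eta>2'"
  shows "functional \<alpha> \<rho> a b F (\<lambda>t. x t + fst e * \<eta>1 t + snd e * \<eta>2 t)
       = integral {a..b} (\<lambda>t. F t (x t + fst e * \<eta>1 t + snd e * \<eta>2 t)
           (capD \<alpha> \<rho> a b x t + fst e * capD \<alpha> \<rho> a b \<eta>1 t + snd e * capD \<alpha> \<rho> a b \<eta>2 t))"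
proof -
  let ?w = "\<lambda>t. fst e * \<eta>1 t + snd e * \<eta>2 t"
  have w: "C1_deriv_on a b ?w (\<lambda>t. fst e * \<eta>1' t + snd e * \<eta>2' t)"
    by (rule C1_deriv_on_lincomb[OF \<eta>1 \<eta>2])
  have "capD \<alpha> \<rho> a b (\<lambda>t. 1 * x t + 1 * ?w t) t
      = capD \<alpha> \<rho> a b x t + fst e * capD \<alpha> \<rho> a b \<eta>1 t + snd e * capD \<alpha> \<rho> a b \<eta>2 t"
    if "t \<in> {a..b}" for t
    using capD_lincomb[OF assms(1-5) x w that, of 1 1] capD_lincomb[OF assms(1-5) \<eta>1 \<eta>2 that] by simp
  then show ?thesis unfolding functional_def by (intro integral_cong) (simp add: add.assoc)
qed

lemma has_derivative_functional_variation:
  assumes ab: "0 < a" "a < b" and p: "0 < \<rho>" "0 < \<alpha>" "\<alpha> < 1" and F: "lagrangian_ok \<alpha> \<rho> a b F"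
    and x: "C1_deriv_on a b x x'" and \<eta>1: "C1_deriv_on a b \<eta>1 \<eta>1'" and \<eta>2: "C1_deriv_on a b \<eta>2 \<eta>2'"
  shows "\<exists>F'. ((\<lambda>e. functional \<alpha> \<rho> a b F (\<lambda>t. x t + fst e * \<eta>1 t + snd e * \<eta>2 t)) has_derivative F') (at e)"
    and "\<eta>1 a = 0 \<Longrightarrow> \<eta>1 b = 0 \<Longrightarrow> \<eta>2 a = 0 \<Longrightarrow> \<eta>2 b = 0 \<Longrightarrow>
      ((\<lambda>e. functional \<alpha> \<rho> a b F (\<lambda>t. x t + fst e * \<eta>1 t + snd e * \<eta>2 t)) has_derivative
        (\<lambda>h. fst h * integral {a..b} (\<lambda>t. \<eta>1 t * el_residual \<alpha> \<rho> a b F x t)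
           + snd h * integral {a..b} (\<lambda>t. \<eta>2 t * el_residual \<alpha> \<rho> a b F x t))) (at 0)"
proof -
  let ?D = "capD \<alpha> \<rho> a b"
  note fv = functional_variation_eq[OF ab p x \<eta>1 \<eta>2, of F]
  note deriv = has_derivative_integral_variation[OF F C1_deriv_on_imp_continuous_on[OF x]
      continuous_on_capD[OF ab p x] C1_deriv_on_imp_continuous_on[OF \<eta>1] C1_deriv_on_imp_continuous_on[OF \<eta>2]
      continuous_on_capD[OF ab p \<eta>1] continuous_on_capD[OF ab p \<eta>2]]
  show "\<exists>F'. ((\<lambda>e. functional \<alpha> \<rho> a b F (\<lambda>t. x t + fst e * \<eta>1 t + snd e * \<eta>2 t)) has_derivative F') (at e)"
    unfolding fv using deriv by blast
  assume "\<eta>1 a = 0" "\<eta>1 b = 0" "\<eta>2 a = 0" "\<eta>2 b = 0"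
  then show "((\<lambda>e. functional \<alpha> \<rho> a b F (\<lambda>t. x t + fst e * \<eta>1 t + snd e * \<eta>2 t)) has_derivative
        (\<lambda>h. fst h * integral {a..b} (\<lambda>t. \<eta>1 t * el_residual \<alpha> \<rho> a b F x t)
           + snd h * integral {a..b} (\<lambda>t. \<eta>2 t * el_residual \<alpha> \<rho> a b F x t))) (at 0)"
    using deriv[of 0] first_variation[OF ab p F x \<eta>1] first_variation[OF ab p F x \<eta>2]
    unfolding fv by simp
qed

text \<open>If the determinant were nonzero, \<open>e \<mapsto> (J(x + e\<^sub>1\<eta>\<^sub>1 + e\<^sub>2\<eta>\<^sub>2), I(x + e\<^sub>1\<eta>\<^sub>1 + e\<^sub>2\<eta>\<^sub>2))\<close> would be
  locally open at \<open>0\<close>, producing admissible competitors arbitrarily close to \<open>x\<close> with the same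
  constraint value and strictly smaller cost.\<close>
lemma constrained_minimizer_det_zero:
  fixes a b \<rho> \<alpha> xa xb l :: real and L g :: "real \<Rightarrow> real \<Rightarrow> real \<Rightarrow> real"
  assumes ab: "0 < a" "a < b" and p: "0 < \<rho>" "0 < \<alpha>" "\<alpha> < 1"
    and L: "lagrangian_ok \<alpha> \<rho> a b L" and g: "lagrangian_ok \<alpha> \<rho> a b g"
    and x: "C1_deriv_on a b x x'" and xa: "x a = xa" and xb: "x b = xb" and gl: "functional \<alpha> \<rho> a b g x = l"
    and min: "\<exists>\<epsilon>>0. \<forall>y. C1_on a b y \<and> y a = xa \<and> y b = xb \<and> functional \<alpha> \<rho> a b g y = l
            \<and> frac_norm \<alpha> \<rho> a b (\<lambda>t. y t - x t) < \<epsilon>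
            \<longrightarrow> functional \<alpha> \<rho> a b L x \<le> functional \<alpha> \<rho> a b L y"
    and \<eta>1: "C1_deriv_on a b \<eta>1 \<eta>1'" "\<eta>1 a = 0" "\<eta>1 b = 0"
    and \<eta>2: "C1_deriv_on a b \<eta>2 \<eta>2'" "\<eta>2 a = 0" "\<eta>2 b = 0"
  shows "integral {a..b} (\<lambda>t. \<eta>1 t * el_residual \<alpha> \<rho> a b L x t) * integral {a..b} (\<lambda>t. \<eta>2 t * el_residual \<alpha> \<rho> a b g x t)
       - integral {a..b} (\<lambda>t. \<eta>2 t * el_residual \<alpha> \<rho> a b L x t) * integral {a..b} (\<lambda>t. \<eta>1 t * el_residual \<alpha> \<rho> a b g x t) = 0"
    (is "?A1 * ?B2 - ?A2 * ?B1 = 0")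
proof (rule ccontr)
  assume det: "?A1 * ?B2 - ?A2 * ?B1 \<noteq> 0"
  define y where "y e t = x t + fst e * \<eta>1 t + snd e * \<eta>2 t" for e :: "real \<times> real" and t
  define \<Phi> where "\<Phi> e = (functional \<alpha> \<rho> a b L (y e), functional \<alpha> \<rho> a b g (y e))" for e
  have y0: "y 0 = x" by (simp add: y_def fun_eq_iff)
  have "isCont \<Phi> e" for e
  proof -
    obtain L' g' where
      "((\<lambda>e. functional \<alpha> \<rho> a b L (\<lambda>t. x t + fst e * \<eta>1 t + snd e * \<eta>2 t)) has_derivative L') (at e)"
      "((\<lambda>e. functional \<alpha> \<rho> a b g (\<lambda>t. x t + fst e * \<eta>1 t + snd e * \<eta>2 t)) has_derivative g') (at e)"
      using has_derivative_functional_variation(1)[OF ab p L x \<eta>1(1) \<eta>2(1)]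
        has_derivative_functional_variation(1)[OF ab p g x \<eta>1(1) \<eta>2(1)] by blast
    from has_derivative_continuous[OF has_derivative_Pair[OF this]] show ?thesis
      unfolding \<Phi>_def y_def .
  qed
  then have cont: "continuous_on UNIV \<Phi>" by (simp add: continuous_at_imp_continuous_on)
  have deriv: "(\<Phi> has_derivative (\<lambda>h. (fst h * ?A1 + snd h * ?A2, fst h * ?B1 + snd h * ?B2))) (at 0)"
    unfolding \<Phi>_def y_def
    by (intro has_derivative_Pair has_derivative_functional_variation(2)[OF ab p L x \<eta>1(1) \<eta>2(1)]
        has_derivative_functional_variation(2)[OF ab p g x \<eta>1(1) \<eta>2(1)]) (use \<eta>1 \<eta>2 in auto)
  obtain \<epsilon> where "\<epsilon> > 0" and min\<epsilon>: "\<And>y. C1_on a b y \<Longrightarrow> y a = xa \<Longrightarrow> y b = xb \<Longrightarrow>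
      functional \<alpha> \<rho> a b g y = l \<Longrightarrow> frac_norm \<alpha> \<rho> a b (\<lambda>t. y t - x t) < \<epsilon> \<Longrightarrow>
      functional \<alpha> \<rho> a b L x \<le> functional \<alpha> \<rho> a b L y"
    using min by blast
  obtain N where "0 \<le> N" and N: "\<And>e. frac_norm \<alpha> \<rho> a b (\<lambda>t. fst e * \<eta>1 t + snd e * \<eta>2 t) \<le> N * norm e"
    using frac_norm_lincomb_le[OF ab p \<eta>1(1) \<eta>2(1)] by blast
  define r where "r = \<epsilon> / (N + 1)"
  have "r > 0" using \<open>\<epsilon> > 0\<close> \<open>0 \<le> N\<close> by (simp add: r_def)
  from det2_open_mapping[OF cont deriv det this]
  obtain \<delta> where "\<delta> > 0" "ball (\<Phi> 0) \<delta> \<subseteq> \<Phi> ` ball 0 r" unfolding mem_interior by blast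
  moreover have "(fst (\<Phi> 0) - \<delta>/2, snd (\<Phi> 0)) \<in> ball (\<Phi> 0) \<delta>"
    using \<open>\<delta> > 0\<close> by (cases "\<Phi> 0") (simp add: dist_Pair_Pair dist_real_def)
  ultimately obtain e where e: "norm e < r" "\<Phi> e = (fst (\<Phi> 0) - \<delta>/2, snd (\<Phi> 0))" by force
  have "frac_norm \<alpha> \<rho> a b (\<lambda>t. y e t - x t) \<le> N * norm e"
    using N[of e] by (simp add: y_def add.assoc)
  also have "\<dots> \<le> N * r" using e(1) \<open>0 \<le> N\<close> by (intro mult_left_mono) auto
  also have "\<dots> < \<epsilon>" using \<open>\<epsilon> > 0\<close> \<open>0 \<le> N\<close> by (simp add: r_def field_simps)
  finally have "frac_norm \<alpha> \<rho> a b (\<lambda>t. y e t - x t) < \<epsilon>" .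
  moreover have "C1_on a b (y e)"
  proof -
    have "C1_deriv_on a b (\<lambda>t. 1 * x t + fst e * \<eta>1 t) (\<lambda>t. 1 * x' t + fst e * \<eta>1' t)"
      by (rule C1_deriv_on_lincomb[OF x \<eta>1(1)])
    from C1_deriv_on_lincomb[OF this \<eta>2(1), of 1 "snd e"]
    show ?thesis unfolding C1_on_iff_C1_deriv_on y_def by auto
  qed
  moreover have "y e a = xa" "y e b = xb" using xa xb \<eta>1 \<eta>2 by (simp_all add: y_def)
  moreover have "functional \<alpha> \<rho> a b g (y e) = l" using e(2) gl y0 by (simp add: \<Phi>_def)
  ultimately have "functional \<alpha> \<rho> a b L x \<le> functional \<alpha> \<rho> a b L (y e)" using min\<epsilon> by blast
  then show False using e(2) y0 \<open>\<delta> > 0\<close> by (simp add: \<Phi>_def)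
qed

lemma multiplier_from_det_zero:
  fixes a b :: real and EL Eg \<eta>2 :: "real \<Rightarrow> real"
  assumes ab: "a < b" and cEL: "continuous_on {a..b} EL" and cEg: "continuous_on {a..b} Eg"
    and B2: "integral {a..b} (\<lambda>t. \<eta>2 t * Eg t) \<noteq> 0"
    and det: "\<And>\<eta>1 \<eta>1'. C1_deriv_on a b \<eta>1 \<eta>1' \<Longrightarrow> \<eta>1 a = 0 \<Longrightarrow> \<eta>1 b = 0 \<Longrightarrow>
      integral {a..b} (\<lambda>t. \<eta>1 t * EL t) * integral {a..b} (\<lambda>t. \<eta>2 t * Eg t)
      - integral {a..b} (\<lambda>t. \<eta>2 t * EL t) * integral {a..b} (\<lambda>t. \<eta>1 t * Eg t) = 0"
  shows "\<exists>lam. \<forall>t\<in>{a..b}. EL t + lam * Eg t = 0"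
proof (intro exI ballI)
  \<comment> \<open>\<open>lam\<close> makes \<open>\<integral> \<eta>\<^sub>2 (EL + lam Eg)\<close> vanish; the determinant condition then makes
    \<open>\<integral> \<eta>\<^sub>1 (EL + lam Eg)\<close> vanish for every admissible \<open>\<eta>\<^sub>1\<close>.\<close>
  define lam where "lam = - integral {a..b} (\<lambda>t. \<eta>2 t * EL t) / integral {a..b} (\<lambda>t. \<eta>2 t * Eg t)"
  fix t assume "t \<in> {a..b}"
  then show "EL t + lam * Eg t = 0"
  proof (rule fundamental_lemma_of_variations[OF ab, rotated -1])
    show "continuous_on {a..b} (\<lambda>t. EL t + lam * Eg t)" using cEL cEg by (intro continuous_intros)
    fix \<eta>1 \<eta>1' assume \<eta>1: "C1_deriv_on a b \<eta>1 \<eta>1'" "\<eta>1 a = 0" "\<eta>1 b = 0"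
    have "(\<lambda>t. \<eta>1 t * EL t) integrable_on {a..b}" "(\<lambda>t. lam * (\<eta>1 t * Eg t)) integrable_on {a..b}"
      using C1_deriv_on_imp_continuous_on[OF \<eta>1(1)] cEL cEg
      by (auto intro!: integrable_continuous_real continuous_intros)
    then have "integral {a..b} (\<lambda>t. \<eta>1 t * (EL t + lam * Eg t))
        = integral {a..b} (\<lambda>t. \<eta>1 t * EL t) + lam * integral {a..b} (\<lambda>t. \<eta>1 t * Eg t)"
      by (simp add: distrib_left integral_add mult.left_commute)
    also have "\<dots> = 0" using det[OF \<eta>1] B2 by (simp add: lam_def field_simps)
    finally show "integral {a..b} (\<lambda>t. \<eta>1 t * (EL t + lam * Eg t)) = 0" .
  qed
qed

theorem mainTheorem8:
  fixes a b \<alpha> \<rho> xa xb l :: real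
    and L g :: "real \<Rightarrow> real \<Rightarrow> real \<Rightarrow> real"
    and x :: "real \<Rightarrow> real"
  assumes "0 < a" "a < b" "0 < \<alpha>" "\<alpha> < 1" "0 < \<rho>"
    and "lagrangian_ok \<alpha> \<rho> a b L" "lagrangian_ok \<alpha> \<rho> a b g"
    and "C1_on a b x" "x a = xa" "x b = xb" "functional \<alpha> \<rho> a b g x = l"
    and "\<exists>\<epsilon>>0. \<forall>y. C1_on a b y \<and> y a = xa \<and> y b = xb \<and> functional \<alpha> \<rho> a b g y = l
            \<and> frac_norm \<alpha> \<rho> a b (\<lambda>t. y t - x t) < \<epsilon>
            \<longrightarrow> functional \<alpha> \<rho> a b L x \<le> functional \<alpha> \<rho> a b L y"
    and "\<not> euler_lagrange \<alpha> \<rho> a b g x"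
  shows "\<exists>lam::real. euler_lagrange \<alpha> \<rho> a b (\<lambda>t u v. L t u v + lam * g t u v) x"
proof -
  note ab = assms(1,2) and p = assms(5,3,4)
  obtain x' where x: "C1_deriv_on a b x x'" using assms(8) C1_on_iff_C1_deriv_on by blast
  have cE: "continuous_on {a..b} (el_residual \<alpha> \<rho> a b F x)" if "lagrangian_ok \<alpha> \<rho> a b F" for F
    using continuous_on_el_residual[OF ab p that x] .
  obtain t0 where "t0 \<in> {a..b}" "el_residual \<alpha> \<rho> a b g x t0 \<noteq> 0"
    using assms(13) unfolding euler_lagrange_iff_el_residual by blast
  then obtain \<eta>2 \<eta>2' where \<eta>2: "C1_deriv_on a b \<eta>2 \<eta>2'" "\<eta>2 a = 0" "\<eta>2 b = 0"
    and "integral {a..b} (\<lambda>t. \<eta>2 t * el_residual \<alpha> \<rho> a b g x t) \<noteq> 0"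
    using exists_bump_integral_nonzero[OF ab(2) cE[OF assms(7)]] by blast
  then obtain lam where "\<forall>t\<in>{a..b}. el_residual \<alpha> \<rho> a b L x t + lam * el_residual \<alpha> \<rho> a b g x t = 0"
    using multiplier_from_det_zero[OF ab(2) cE[OF assms(6)] cE[OF assms(7)]]
      constrained_minimizer_det_zero[OF ab p assms(6,7) x assms(9-12) _ _ _ \<eta>2] by blast
  then show ?thesis
    unfolding euler_lagrange_iff_el_residual
    using el_residual_lincomb[OF ab p assms(6,7) x] by (intro exI[of _ lam]) auto
qed

end
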